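(* Let $I\subset\mathbb{K}[x_1,\ldots,x_n]$ be a zero-dimensional ideal of degree $D$ in shape position, with reduced LEX Gröbner basis $[f_1(x_1),x_2-f_2(x_1),\ldots,x_n-f_n(x_1)]$. Let $T_1,\ldots,T_n$ be the multiplication matrices w.r.t. a Gröbner basis of $I$ for a term ordering $<_1$, with $T_1$ nonsingular, and let $\mathbf{e}=(1,0,\ldots,0)^t\in\mathbb{K}^D$. Let $\mathbf{w}\in\mathbb{K}^D$ be such that the minimal polynomial $\tilde f_1$ of the sequence $(\langle\mathbf{w},T_1^i\mathbf{e}\rangle)_{i=0}^{2D-1}$ is a proper factor of $f_1$ of degree $d<D$. For each $i=2,\ldots,n$, consider the linear system in the unknowns $y_0,\ldots,y_{d-1}$: $$\langle\mathbf{w},T_1^jT_i\mathbf{e}\rangle=\sum_{k=0}^{d-1}y_k\langle\mathbf{w},T_1^{k+j}\mathbf{e}\rangle,\qquad j=0,\ldots,d-1,$$ which has a unique solution $c_{i,0},\ldots,c_{i,d-1}$. Then $x_i-\sum_{k=0}^{d-1}c_{i,k}x_1^k$ belongs to the Gröbner basis of $I+\langle\tilde f_1\rangle$ w.r.t. LEX.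
   Context: Variables are ordered $x_1<\cdots<x_n$, and LEX is the lexicographic ordering with this variable order. $D=\dim_{\mathbb{K}}\mathbb{K}[x_1,\ldots,x_n]/I$. Let $B=[\epsilon_1,\ldots,\epsilon_D]$ be the canonical basis (standard monomials) of the quotient w.r.t. $<_1$, ordered increasingly, with $\epsilon_1=1$. $T_i$ is the $D\times D$ matrix whose $j$-th column is the coordinate vector of the normal form of $\epsilon_j x_i$. $\langle\cdot,\cdot\rangle$ is the standard inner product. *)

theory Defs
  imports "HOL-Library.Poly_Mapping" "HOL-Computational_Algebra.Polynomial" "Jordan_Normal_Form.Matrix"
begin

text \<open>Multivariate polynomials over a field: monomials are finitely supported exponent
  vectors (variable x_i has index i, i = 1..n), polynomials are finitely supported
  maps from monomials to coefficients (Poly_Mapping convolution gives the product).\<close>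

type_synonym mono = "nat \<Rightarrow>\<^sub>0 nat"
type_synonym 'a mpoly = "mono \<Rightarrow>\<^sub>0 'a"

definition Var :: "nat \<Rightarrow> 'a::comm_ring_1 mpoly" where
  "Var i = Poly_Mapping.single (Poly_Mapping.single i 1) 1"

definition Pn :: "nat \<Rightarrow> 'a::comm_ring_1 mpoly set" where
  "Pn n = {p. \<forall>m\<in>Poly_Mapping.keys p. Poly_Mapping.keys m \<subseteq> {1..n}}"

definition is_ideal :: "nat \<Rightarrow> 'a::comm_ring_1 mpoly set \<Rightarrow> bool" where
  "is_ideal n I \<longleftrightarrow> I \<subseteq> Pn n \<and> 0 \<in> I \<and> (\<forall>a\<in>I. \<forall>b\<in>I. a + b \<in> I)
     \<and> (\<forall>q\<in>Pn n. \<forall>a\<in>I. q * a \<in> I)"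

definition ideal_add :: "nat \<Rightarrow> 'a::comm_ring_1 mpoly set \<Rightarrow> 'a mpoly \<Rightarrow> 'a mpoly set" where
  "ideal_add n I p = {a + q * p | a q. a \<in> I \<and> q \<in> Pn n}"

definition term_order :: "nat \<Rightarrow> (mono \<Rightarrow> mono \<Rightarrow> bool) \<Rightarrow> bool" where
  "term_order n lt \<longleftrightarrow>
     (\<forall>a. \<not> lt a a) \<and> (\<forall>a b c. lt a b \<longrightarrow> lt b c \<longrightarrow> lt a c) \<and>
     (\<forall>a b. Poly_Mapping.keys a \<subseteq> {1..n} \<longrightarrow> Poly_Mapping.keys b \<subseteq> {1..n} \<longrightarrow> a = b \<or> lt a b \<or> lt b a) \<and>
     (\<forall>a. Poly_Mapping.keys a \<subseteq> {1..n} \<longrightarrow> a \<noteq> 0 \<longrightarrow> lt 0 a) \<and>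
     (\<forall>a b c. lt a b \<longrightarrow> lt (a + c) (b + c))"

text \<open>LEX with x_1 < ... < x_n: compare exponents of the largest variable first.\<close>
definition lex :: "mono \<Rightarrow> mono \<Rightarrow> bool" where
  "lex a b \<longleftrightarrow> (\<exists>k. Poly_Mapping.lookup a k < Poly_Mapping.lookup b k \<and> (\<forall>j>k. Poly_Mapping.lookup a j = Poly_Mapping.lookup b j))"

definition lm :: "(mono \<Rightarrow> mono \<Rightarrow> bool) \<Rightarrow> 'a::zero mpoly \<Rightarrow> mono" where
  "lm lt p = (THE m. m \<in> Poly_Mapping.keys p \<and> (\<forall>m'\<in>Poly_Mapping.keys p. m' \<noteq> m \<longrightarrow> lt m' m))"

definition lc :: "(mono \<Rightarrow> mono \<Rightarrow> bool) \<Rightarrow> 'a::zero mpoly \<Rightarrow> 'a" where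
  "lc lt p = Poly_Mapping.lookup p (lm lt p)"

definition mdvd :: "mono \<Rightarrow> mono \<Rightarrow> bool" where
  "mdvd a b \<longleftrightarrow> (\<forall>v. Poly_Mapping.lookup a v \<le> Poly_Mapping.lookup b v)"

definition is_GB :: "nat \<Rightarrow> (mono \<Rightarrow> mono \<Rightarrow> bool) \<Rightarrow> 'a::comm_ring_1 mpoly set \<Rightarrow> 'a mpoly set \<Rightarrow> bool" where
  "is_GB n lt I G \<longleftrightarrow> finite G \<and> G \<subseteq> I \<and>
     (\<forall>f\<in>I. f \<noteq> 0 \<longrightarrow> (\<exists>g\<in>G. g \<noteq> 0 \<and> mdvd (lm lt g) (lm lt f)))"

definition is_reduced_GB :: "nat \<Rightarrow> (mono \<Rightarrow> mono \<Rightarrow> bool) \<Rightarrow> 'a::comm_ring_1 mpoly set \<Rightarrow> 'a mpoly set \<Rightarrow> bool" where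
  "is_reduced_GB n lt I G \<longleftrightarrow> is_GB n lt I G \<and> 0 \<notin> G \<and> (\<forall>g\<in>G. lc lt g = 1) \<and>
     (\<forall>g\<in>G. \<forall>g'\<in>G - {g}. \<forall>m\<in>Poly_Mapping.keys g. \<not> mdvd (lm lt g') m)"

definition std_monos :: "nat \<Rightarrow> (mono \<Rightarrow> mono \<Rightarrow> bool) \<Rightarrow> 'a::comm_ring_1 mpoly set \<Rightarrow> mono set" where
  "std_monos n lt I = {m. Poly_Mapping.keys m \<subseteq> {1..n} \<and> (\<forall>f\<in>I. f \<noteq> 0 \<longrightarrow> lm lt f \<noteq> m)}"

definition canon_basis :: "nat \<Rightarrow> (mono \<Rightarrow> mono \<Rightarrow> bool) \<Rightarrow> 'a::comm_ring_1 mpoly set \<Rightarrow> mono list" where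
  "canon_basis n lt I = (THE xs. sorted_wrt lt xs \<and> set xs = std_monos n lt I)"

definition nf :: "nat \<Rightarrow> (mono \<Rightarrow> mono \<Rightarrow> bool) \<Rightarrow> 'a::comm_ring_1 mpoly set \<Rightarrow> 'a mpoly \<Rightarrow> 'a mpoly" where
  "nf n lt I p = (THE r. r \<in> Pn n \<and> p - r \<in> I \<and> Poly_Mapping.keys r \<subseteq> std_monos n lt I)"

text \<open>Multiplication matrix T_i: column j is the coordinate vector of NF(eps_j x_i) in B.\<close>
definition mult_mat :: "nat \<Rightarrow> (mono \<Rightarrow> mono \<Rightarrow> bool) \<Rightarrow> 'a::comm_ring_1 mpoly set \<Rightarrow> nat \<Rightarrow> 'a mat" where
  "mult_mat n lt I i = (let B = canon_basis n lt I in
     mat (length B) (length B)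
       (\<lambda>(k, j). Poly_Mapping.lookup (nf n lt I (Poly_Mapping.single (B ! j) 1 * Var i)) (B ! k)))"

definition uni :: "'a::comm_ring_1 poly \<Rightarrow> 'a mpoly" where
  "uni p = (\<Sum>k\<le>Polynomial.degree p. Poly_Mapping.single (Poly_Mapping.single 1 k) (coeff p k))"

definition annihilates :: "(nat \<Rightarrow> 'a::comm_ring_1) \<Rightarrow> nat \<Rightarrow> 'a poly \<Rightarrow> bool" where
  "annihilates a N P \<longleftrightarrow>
     (\<forall>j. j + Polynomial.degree P < N \<longrightarrow> (\<Sum>k\<le>Polynomial.degree P. coeff P k * a (k + j)) = 0)"

definition is_minpoly_seq :: "(nat \<Rightarrow> 'a::field) \<Rightarrow> nat \<Rightarrow> 'a poly \<Rightarrow> bool" where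
  "is_minpoly_seq a N P \<longleftrightarrow> lead_coeff P = 1 \<and> annihilates a N P \<and>
     (\<forall>Q. Q \<noteq> 0 \<longrightarrow> annihilates a N Q \<longrightarrow> Polynomial.degree P \<le> Polynomial.degree Q)"

end

theory Submission
  imports Defs "HOL-Library.Ramsey" "Jordan_Normal_Form.Char_Poly"
begin

text \<open>
  Let \<open>L\<close> be the linear form \<open>p \<mapsto> \<langle>w, coordinates of NF(p)\<rangle>\<close> on \<open>K[x]/I\<close>, so that
  \<open>\<langle>w, T\<^sub>1\<^sup>j e\<rangle> = L(x\<^sub>1\<^sup>j)\<close> and \<open>\<langle>w, T\<^sub>1\<^sup>j T\<^sub>i e\<rangle> = L(x\<^sub>1\<^sup>j x\<^sub>i)\<close>, and write \<open>ft\<close> for the minimal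
  polynomial of the sequence \<open>L(x\<^sub>1\<^sup>j)\<close>. Since \<open>K[x]/I\<close> has dimension \<open>D\<close>, some nonzero
  univariate \<open>P\<close> of degree \<open>\<le> D\<close> lies in \<open>I\<close>; so the sequence \<open>L(x\<^sub>1\<^sup>j ft)\<close> satisfies the
  recurrence of \<open>P\<close>, and as its first \<open>2D - d \<ge> D\<close> terms vanish, it vanishes identically.
  In shape position every polynomial is univariate modulo \<open>I\<close>, hence \<open>L(x\<^sub>1\<^sup>j h) = 0\<close> for all
  \<open>h \<in> I + \<langle>ft\<rangle>\<close>, whereas by minimality of \<open>ft\<close> no nonzero univariate polynomial of degree
  \<open>< d\<close> has this property. This makes the Hankel system nonsingular, identifies its solution
  with the coefficients of \<open>f\<^sub>i mod ft\<close> (as \<open>x\<^sub>i \<equiv> f\<^sub>i(x\<^sub>1)\<close> modulo \<open>I\<close>), and shows that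
  \<open>{ft} \<union> {x\<^sub>i - (f\<^sub>i mod ft)}\<close> is the reduced LEX basis of \<open>I + \<langle>ft\<rangle>\<close>: an element of
  \<open>I + \<langle>ft\<rangle>\<close> whose leading monomial is divisible by none of \<open>x\<^sub>1\<^sup>d, x\<^sub>2, \<dots>, x\<^sub>n\<close> is
  univariate of degree \<open>< d\<close>, hence zero.
\<close>

section \<open>Polynomials in \<open>x\<^sub>1, \<dots>, x\<^sub>n\<close>\<close>

abbreviation mconst :: "'b \<Rightarrow> ('x::zero \<Rightarrow>\<^sub>0 'b::zero)" where
  "mconst c \<equiv> Poly_Mapping.single 0 c"

lemma lookup_mconst_mult:
  "Poly_Mapping.lookup (mconst c * p) k = c * Poly_Mapping.lookup (p :: 'x::comm_monoid_add \<Rightarrow>\<^sub>0 'b::comm_semiring_1) k"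
  by (simp add: mult_map_scale_conv_mult[symmetric] Poly_Mapping.map.rep_eq when_def)

lemma keys_mconst_mult:
  "Poly_Mapping.keys (mconst c * p) \<subseteq> Poly_Mapping.keys (p :: 'x::comm_monoid_add \<Rightarrow>\<^sub>0 'b::comm_semiring_1)"
  by (auto simp: in_keys_iff lookup_mconst_mult)

lemma single_eq_0_iff: "Poly_Mapping.single k v = 0 \<longleftrightarrow> v = 0"
  by (metis lookup_single_eq lookup_zero single_zero)

lemma sum_single_lookup: "(\<Sum>m\<in>Poly_Mapping.keys p. Poly_Mapping.single m (Poly_Mapping.lookup p m)) = p"
  by (rule poly_mapping_eqI) (simp add: lookup_sum lookup_single when_def in_keys_iff)

lemma poly_mapping_keys_induct [consumes 1, case_names zero single add]:
  fixes p :: "'x \<Rightarrow>\<^sub>0 'b::comm_monoid_add"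
  assumes "Poly_Mapping.keys p \<subseteq> S"
    and "P 0"
    and "\<And>m c. m \<in> S \<Longrightarrow> P (Poly_Mapping.single m c)"
    and "\<And>a b. P a \<Longrightarrow> P b \<Longrightarrow> P (a + b)"
  shows "P p"
proof -
  have "P (\<Sum>m\<in>M. Poly_Mapping.single m (Poly_Mapping.lookup p m))" if "M \<subseteq> Poly_Mapping.keys p" for M
    using finite_subset[OF that finite_keys] that
  proof (induction M rule: finite_induct)
    case (insert m M)
    then have "P (\<Sum>m\<in>M. Poly_Mapping.single m (Poly_Mapping.lookup p m))" "m \<in> S"
      using assms(1) by auto
    then show ?case
      using assms(3,4) insert.hyps by simp
  qed (simp add: assms(2))
  from this[of "Poly_Mapping.keys p"] show ?thesis
    by (simp add: sum_single_lookup)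
qed

lemma Pn_0 [simp]: "0 \<in> Pn n"
  by (simp add: Pn_def)

lemma Pn_single: "Poly_Mapping.keys m \<subseteq> {1..n} \<Longrightarrow> Poly_Mapping.single m c \<in> Pn n"
  by (auto simp: Pn_def)

lemma Pn_mconst [simp]: "mconst c \<in> Pn n"
  by (auto simp: Pn_def)

lemma Pn_one [simp]: "1 \<in> Pn n"
  by (auto simp: Pn_def)

lemma Pn_add: "p \<in> Pn n \<Longrightarrow> q \<in> Pn n \<Longrightarrow> p + q \<in> Pn n"
  using keys_add[of p q] by (auto simp: Pn_def)

lemma Pn_diff: "p \<in> Pn n \<Longrightarrow> q \<in> Pn n \<Longrightarrow> p - q \<in> Pn n"
  using keys_diff[of p q] by (auto simp: Pn_def)

lemma Pn_mult:
  assumes "p \<in> Pn n" "q \<in> Pn n"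
  shows "p * q \<in> Pn n"
  unfolding Pn_def mem_Collect_eq
proof (intro ballI)
  fix m
  assume "m \<in> Poly_Mapping.keys (p * q)"
  then obtain a b where "m = a + b" "a \<in> Poly_Mapping.keys p" "b \<in> Poly_Mapping.keys q"
    using keys_mult[of p q] by blast
  moreover have "Poly_Mapping.keys a \<subseteq> {1..n}" "Poly_Mapping.keys b \<subseteq> {1..n}"
    using assms \<open>a \<in> _\<close> \<open>b \<in> _\<close> by (auto simp: Pn_def)
  ultimately show "Poly_Mapping.keys m \<subseteq> {1..n}"
    using keys_add[of a b] by blast
qed

lemma Pn_sum: "(\<And>x. x \<in> A \<Longrightarrow> f x \<in> Pn n) \<Longrightarrow> sum f A \<in> Pn n"
  by (induction A rule: infinite_finite_induct) (auto intro: Pn_add)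

lemma Pn_power: "p \<in> Pn n \<Longrightarrow> p ^ k \<in> Pn n"
  by (induction k) (auto intro: Pn_mult)

lemma Pn_Var: "i \<in> {1..n} \<Longrightarrow> Var i \<in> Pn n"
  by (auto simp: Var_def Pn_def)

lemma Pn_uni: "1 \<le> n \<Longrightarrow> uni P \<in> Pn n"
  unfolding uni_def by (rule Pn_sum) (auto simp: Pn_def)

lemma Pn_X1_power: "1 \<le> n \<Longrightarrow> Var 1 ^ k \<in> Pn n"
  by (intro Pn_power Pn_Var) auto

lemma is_ideal_Pn: "is_ideal n I \<Longrightarrow> a \<in> I \<Longrightarrow> a \<in> Pn n"
  by (auto simp: is_ideal_def)

lemma is_ideal_0: "is_ideal n I \<Longrightarrow> 0 \<in> I"
  by (auto simp: is_ideal_def)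

lemma is_ideal_add: "is_ideal n I \<Longrightarrow> a \<in> I \<Longrightarrow> b \<in> I \<Longrightarrow> a + b \<in> I"
  by (auto simp: is_ideal_def)

lemma is_ideal_mult: "is_ideal n I \<Longrightarrow> q \<in> Pn n \<Longrightarrow> a \<in> I \<Longrightarrow> q * a \<in> I"
  by (auto simp: is_ideal_def)

lemma is_ideal_diff:
  assumes "is_ideal n I" "a \<in> I" "b \<in> I"
  shows "a - b \<in> I"
proof -
  have "mconst (-1) * b \<in> I"
    using assms by (intro is_ideal_mult) auto
  moreover have "mconst (-1) * b = - b"
    by (rule poly_mapping_eqI) (simp add: lookup_mconst_mult)
  ultimately show ?thesis
    using is_ideal_add[OF assms(1,2), of "- b"] by simp
qed

lemma ideal_add_subset_Pn:
  assumes "is_ideal n I" "p \<in> Pn n"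
  shows "ideal_add n I p \<subseteq> Pn n"
proof
  fix h
  assume "h \<in> ideal_add n I p"
  then obtain a q where "h = a + q * p" "a \<in> I" "q \<in> Pn n"
    unfolding ideal_add_def by blast
  then show "h \<in> Pn n"
    using assms is_ideal_Pn Pn_add Pn_mult by metis
qed

section \<open>Term orders and leading monomials\<close>

definition strict_total_on :: "'x set \<Rightarrow> ('x \<Rightarrow> 'x \<Rightarrow> bool) \<Rightarrow> bool" where
  "strict_total_on A lt \<longleftrightarrow> (\<forall>a. \<not> lt a a) \<and> (\<forall>a b c. lt a b \<longrightarrow> lt b c \<longrightarrow> lt a c) \<and>
     (\<forall>a\<in>A. \<forall>b\<in>A. a = b \<or> lt a b \<or> lt b a)"

lemma strict_total_on_greatest:
  assumes "strict_total_on A lt" "finite X" "X \<noteq> {}" "X \<subseteq> A"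
  shows "\<exists>m\<in>X. \<forall>m'\<in>X. m' \<noteq> m \<longrightarrow> lt m' m"
  using assms(2,3,4)
proof (induction X rule: finite_ne_induct)
  case (singleton x)
  then show ?case by auto
next
  case (insert x F)
  then obtain m where m: "m \<in> F" "\<forall>m'\<in>F. m' \<noteq> m \<longrightarrow> lt m' m"
    by auto
  have x_in: "x \<in> A" "m \<in> A"
    using insert m by auto
  show ?case
  proof (cases "lt m x")
    case True
    have trans: "\<And>a b c. lt a b \<Longrightarrow> lt b c \<Longrightarrow> lt a c"
      using assms(1) unfolding strict_total_on_def by blast
    have "\<forall>m'\<in>insert x F. m' \<noteq> x \<longrightarrow> lt m' x"
      using m True trans by auto
    then show ?thesis
      by auto
  next
    case False
    then have "x = m \<or> lt x m"
      using assms(1) x_in unfolding strict_total_on_def by blast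
    then show ?thesis
      using m by auto
  qed
qed

lemma lm_eqI:
  assumes "strict_total_on A lt" "m \<in> Poly_Mapping.keys p"
    and "\<forall>m'\<in>Poly_Mapping.keys p. m' \<noteq> m \<longrightarrow> lt m' m"
  shows "lm lt p = m"
  unfolding lm_def
proof (rule the_equality)
  fix m2
  assume m2: "m2 \<in> Poly_Mapping.keys p \<and> (\<forall>m'\<in>Poly_Mapping.keys p. m' \<noteq> m2 \<longrightarrow> lt m' m2)"
  show "m2 = m"
  proof (rule ccontr)
    assume "m2 \<noteq> m"
    then have "lt m m2" "lt m2 m"
      using m2 assms(2,3) by auto
    then show False
      using assms(1) unfolding strict_total_on_def by blast
  qed
qed (use assms in auto)

lemma
  assumes "strict_total_on A lt" "p \<noteq> 0" "Poly_Mapping.keys p \<subseteq> A"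
  shows lm_in_keys: "lm lt p \<in> Poly_Mapping.keys p"
    and lm_greatest: "\<forall>m'\<in>Poly_Mapping.keys p. m' \<noteq> lm lt p \<longrightarrow> lt m' (lm lt p)"
proof -
  obtain m where m: "m \<in> Poly_Mapping.keys p" "\<forall>m'\<in>Poly_Mapping.keys p. m' \<noteq> m \<longrightarrow> lt m' m"
    using strict_total_on_greatest[OF assms(1) finite_keys _ assms(3)] assms(2) by auto
  with lm_eqI[OF assms(1)] have "lm lt p = m"
    by blast
  with m show "lm lt p \<in> Poly_Mapping.keys p" "\<forall>m'\<in>Poly_Mapping.keys p. m' \<noteq> lm lt p \<longrightarrow> lt m' (lm lt p)"
    by auto
qed

lemma lex_irrefl: "\<not> lex a a"
  by (auto simp: lex_def)

lemma lex_trans: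
  assumes "lex a b" "lex b c"
  shows "lex a c"
proof -
  obtain k1 k2
    where 1: "Poly_Mapping.lookup a k1 < Poly_Mapping.lookup b k1"
             "\<forall>j>k1. Poly_Mapping.lookup a j = Poly_Mapping.lookup b j"
      and 2: "Poly_Mapping.lookup b k2 < Poly_Mapping.lookup c k2"
             "\<forall>j>k2. Poly_Mapping.lookup b j = Poly_Mapping.lookup c j"
    using assms by (auto simp: lex_def)
  show ?thesis
    unfolding lex_def
  proof (cases "k1 < k2")
    case True
    then show "\<exists>k. Poly_Mapping.lookup a k < Poly_Mapping.lookup c k \<and>
        (\<forall>j>k. Poly_Mapping.lookup a j = Poly_Mapping.lookup c j)"
      using 1 2 by (intro exI[of _ k2]) auto
  next
    case False
    have "Poly_Mapping.lookup a k1 < Poly_Mapping.lookup c k1"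
    proof (cases "k1 = k2")
      case True
      then show ?thesis
        using 1 2 by simp
    next
      case False
      then have "k2 < k1"
        using \<open>\<not> k1 < k2\<close> by simp
      then show ?thesis
        using 1 2 by simp
    qed
    moreover have "\<forall>j>k1. Poly_Mapping.lookup a j = Poly_Mapping.lookup c j"
      using 1 2 False by simp
    ultimately show "\<exists>k. Poly_Mapping.lookup a k < Poly_Mapping.lookup c k \<and>
        (\<forall>j>k. Poly_Mapping.lookup a j = Poly_Mapping.lookup c j)"
      by blast
  qed
qed

lemma lex_total: "a = b \<or> lex a b \<or> lex b a"
proof (cases "a = b")
  case False
  let ?K = "{k. Poly_Mapping.lookup a k \<noteq> Poly_Mapping.lookup b k}"
  have fin: "finite ?K"
    by (rule finite_subset[of _ "Poly_Mapping.keys a \<union> Poly_Mapping.keys b"]) (auto simp: in_keys_iff)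
  have "?K \<noteq> {}"
  proof
    assume "?K = {}"
    then have "a = b"
      by (intro poly_mapping_eqI) auto
    with False show False
      by simp
  qed
  define k where "k = Max ?K"
  have k: "k \<in> ?K"
    using Max_in[OF fin \<open>?K \<noteq> {}\<close>] unfolding k_def .
  have above: "\<forall>j>k. Poly_Mapping.lookup a j = Poly_Mapping.lookup b j"
  proof (intro allI impI)
    fix j
    assume "k < j"
    show "Poly_Mapping.lookup a j = Poly_Mapping.lookup b j"
    proof (rule ccontr)
      assume "Poly_Mapping.lookup a j \<noteq> Poly_Mapping.lookup b j"
      then have "j \<le> k"
        using Max_ge[OF fin, of j] k_def by simp
      then show False
        using \<open>k < j\<close> by simp
    qed
  qed
  show ?thesis
  proof (cases "Poly_Mapping.lookup a k < Poly_Mapping.lookup b k")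
    case True
    then show ?thesis
      using above by (auto simp: lex_def)
  next
    case False
    then have "Poly_Mapping.lookup b k < Poly_Mapping.lookup a k"
      using k by auto
    then show ?thesis
      using above by (auto simp: lex_def)
  qed
qed simp

lemma strict_total_on_lex: "strict_total_on UNIV lex"
  unfolding strict_total_on_def using lex_irrefl lex_trans lex_total by blast

lemma
  assumes "term_order n lt"
  shows term_order_irrefl: "\<not> lt a a"
    and term_order_trans: "lt a b \<Longrightarrow> lt b c \<Longrightarrow> lt a c"
    and term_order_zero_less: "Poly_Mapping.keys a \<subseteq> {1..n} \<Longrightarrow> a \<noteq> 0 \<Longrightarrow> lt 0 a"
    and term_order_add_right: "lt a b \<Longrightarrow> lt (a + c) (b + c)"
  using assms unfolding term_order_def by blast+

lemma strict_total_on_term_order: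
  "term_order n lt \<Longrightarrow> strict_total_on {m. Poly_Mapping.keys m \<subseteq> {1..n}} lt"
  unfolding term_order_def strict_total_on_def by blast

text \<open>A term order refines divisibility, so a smaller monomial is smaller in some exponent;
  hence a term order is contained in a finite union of measures and thus well-founded.\<close>

lemma term_order_less_exponent:
  assumes lt: "term_order n lt" and a: "Poly_Mapping.keys a \<subseteq> {1..n}"
    and b: "Poly_Mapping.keys b \<subseteq> {1..n}" and ba: "lt b a"
  shows "\<exists>v<n. Poly_Mapping.lookup b (Suc v) < Poly_Mapping.lookup a (Suc v)"
proof (rule ccontr)
  assume contra: "\<not> ?thesis"
  have le: "Poly_Mapping.lookup a v \<le> Poly_Mapping.lookup b v" if "v \<in> {1..n}" for v
  proof -
    have "v = Suc (v - 1)" "v - 1 < n"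
      using that by auto
    moreover have "\<not> Poly_Mapping.lookup b (Suc (v - 1)) < Poly_Mapping.lookup a (Suc (v - 1))"
      using contra \<open>v - 1 < n\<close> by blast
    ultimately show ?thesis
      by simp
  qed
  define c where "c = b - a"
  have b_eq: "b = c + a"
  proof (rule poly_mapping_eqI)
    fix v
    show "Poly_Mapping.lookup b v = Poly_Mapping.lookup (c + a) v"
    proof (cases "v \<in> {1..n}")
      case True
      then show ?thesis
        using le[OF True] by (simp add: c_def lookup_add lookup_minus)
    next
      case False
      then have "Poly_Mapping.lookup a v = 0"
        using a by (auto simp: in_keys_iff)
      then show ?thesis
        by (simp add: c_def lookup_add lookup_minus)
    qed
  qed
  have "Poly_Mapping.keys c \<subseteq> {1..n}"
    using b by (auto simp: c_def in_keys_iff lookup_minus)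
  show False
  proof (cases "c = 0")
    case True
    then show False
      using b_eq ba term_order_irrefl[OF lt] by simp
  next
    case False
    then have "lt (0 + a) (c + a)"
      using term_order_zero_less[OF lt \<open>Poly_Mapping.keys c \<subseteq> {1..n}\<close>] term_order_add_right[OF lt]
      by blast
    then have "lt a b"
      using b_eq by simp
    then show False
      using ba term_order_trans[OF lt] term_order_irrefl[OF lt] by blast
  qed
qed

lemma wf_term_order:
  assumes "term_order n lt"
  shows "wf {(b, a). lt b a \<and> Poly_Mapping.keys a \<subseteq> {1..n} \<and> Poly_Mapping.keys b \<subseteq> {1..n}}"
    (is "wf ?R")
proof (rule trans_disj_wf_implies_wf)
  show "trans ?R"
    using term_order_trans[OF assms] unfolding trans_def by blast
  have "?R \<subseteq> (\<Union>i<n. measure (\<lambda>m. Poly_Mapping.lookup m (Suc i)))"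
  proof
    fix x
    assume "x \<in> ?R"
    then obtain b a where x: "x = (b, a)" "lt b a" "Poly_Mapping.keys a \<subseteq> {1..n}" "Poly_Mapping.keys b \<subseteq> {1..n}"
      by auto
    then obtain v where "v < n" "Poly_Mapping.lookup b (Suc v) < Poly_Mapping.lookup a (Suc v)"
      using term_order_less_exponent[OF assms] by blast
    then show "x \<in> (\<Union>i<n. measure (\<lambda>m. Poly_Mapping.lookup m (Suc i)))"
      using x by auto
  qed
  then show "disj_wf ?R"
    unfolding disj_wf
    by (intro exI[of _ "\<lambda>i. measure (\<lambda>m. Poly_Mapping.lookup m (Suc i))"] exI[of _ n]) simp
qed

lemma sorted_wrt_insert_exists:
  assumes "strict_total_on A lt" "sorted_wrt lt xs" "set xs \<subseteq> A" "x \<in> A" "x \<notin> set xs"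
  shows "\<exists>ys. sorted_wrt lt ys \<and> set ys = insert x (set xs)"
  using assms(2-5)
proof (induction xs)
  case Nil
  then show ?case by (intro exI[of _ "[x]"]) simp
next
  case (Cons y ys)
  have trans: "\<And>a b c. lt a b \<Longrightarrow> lt b c \<Longrightarrow> lt a c"
    using assms(1) unfolding strict_total_on_def by blast
  show ?case
  proof (cases "lt x y")
    case True
    then have "sorted_wrt lt (x # y # ys)"
      using Cons.prems(1) trans by auto
    then show ?thesis by (intro exI[of _ "x # y # ys"]) auto
  next
    case False
    have "x = y \<or> lt x y \<or> lt y x"
      using assms(1) Cons.prems unfolding strict_total_on_def by auto
    with False Cons.prems(4) have "lt y x"
      by auto
    moreover obtain zs where "sorted_wrt lt zs" "set zs = insert x (set ys)"
      using Cons by auto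
    ultimately show ?thesis
      using Cons.prems(1) by (intro exI[of _ "y # zs"]) auto
  qed
qed

lemma sorted_wrt_exists:
  assumes "strict_total_on A lt" "finite X" "X \<subseteq> A"
  shows "\<exists>xs. sorted_wrt lt xs \<and> set xs = X"
  using assms(2,3)
proof (induction X rule: finite_induct)
  case empty
  then show ?case by (intro exI[of _ "[]"]) simp
next
  case (insert x F)
  then obtain xs where "sorted_wrt lt xs" "set xs = F"
    by auto
  then show ?case
    using sorted_wrt_insert_exists[OF assms(1), of xs x] insert by auto
qed

lemma sorted_wrt_unique:
  assumes "strict_total_on A lt" "sorted_wrt lt xs" "sorted_wrt lt ys" "set xs = set ys"
  shows "xs = ys"
  using assms(2-4)
proof (induction xs arbitrary: ys)
  case Nil
  then show ?case by simp
next
  case (Cons x xs)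
  then obtain y ys' where ys: "ys = y # ys'"
    by (cases ys) auto
  have irrefl: "\<And>a. \<not> lt a a" and trans: "\<And>a b c. lt a b \<Longrightarrow> lt b c \<Longrightarrow> lt a c"
    using assms(1) unfolding strict_total_on_def by blast+
  have "x = y"
  proof (rule ccontr)
    assume "x \<noteq> y"
    then have "x \<in> set ys'" "y \<in> set xs"
      using Cons.prems ys by (auto simp: set_eq_iff)
    then have "lt y x" "lt x y"
      using Cons.prems ys by auto
    then show False
      using irrefl trans by blast
  qed
  moreover have "x \<notin> set xs" "y \<notin> set ys'"
    using Cons.prems ys irrefl by auto
  ultimately have "set xs = set ys'"
    using Cons.prems(3) ys by (auto simp: set_eq_iff)
  then show ?case
    using Cons.IH Cons.prems ys \<open>x = y\<close> by auto
qed

lemma sorted_wrt_irrefl_distinct: "(\<And>a. \<not> lt a a) \<Longrightarrow> sorted_wrt lt xs \<Longrightarrow> distinct xs"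
  by (induction xs) auto

section \<open>Normal forms and multiplication matrices\<close>

locale zero_dim_ideal =
  fixes n :: nat and lt1 :: "mono \<Rightarrow> mono \<Rightarrow> bool" and I :: "'a::field mpoly set"
  assumes ideal: "is_ideal n I" and term_order: "term_order n lt1"
    and finite_std: "finite (std_monos n lt1 I)"
begin

abbreviation "S \<equiv> std_monos n lt1 I"
abbreviation "NF \<equiv> nf n lt1 I"

lemma std_monos_keys: "m \<in> S \<Longrightarrow> Poly_Mapping.keys m \<subseteq> {1..n}"
  by (simp add: std_monos_def)

lemma strict_total_lt1: "strict_total_on {m. Poly_Mapping.keys m \<subseteq> {1..n}} lt1"
  using strict_total_on_term_order[OF term_order] .

lemma keys_subset_if_Pn: "p \<in> Pn n \<Longrightarrow> Poly_Mapping.keys p \<subseteq> {m. Poly_Mapping.keys m \<subseteq> {1..n}}"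
  by (auto simp: Pn_def)

definition std_representable :: "'a mpoly \<Rightarrow> bool" where
  "std_representable p \<longleftrightarrow> (\<exists>r. r \<in> Pn n \<and> p - r \<in> I \<and> Poly_Mapping.keys r \<subseteq> S)"

lemma std_representable_add:
  assumes "std_representable p" "std_representable q"
  shows "std_representable (p + q)"
proof -
  obtain r1 r2 where r: "r1 \<in> Pn n" "p - r1 \<in> I" "Poly_Mapping.keys r1 \<subseteq> S"
    "r2 \<in> Pn n" "q - r2 \<in> I" "Poly_Mapping.keys r2 \<subseteq> S"
    using assms unfolding std_representable_def by blast
  have "(p + q) - (r1 + r2) = (p - r1) + (q - r2)"
    by (simp add: algebra_simps)
  also have "\<dots> \<in> I"
    using is_ideal_add[OF ideal r(2) r(5)] .
  finally have "(p + q) - (r1 + r2) \<in> I" .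
  moreover have "Poly_Mapping.keys (r1 + r2) \<subseteq> S"
    using keys_add[of r1 r2] r by auto
  ultimately show ?thesis
    unfolding std_representable_def using Pn_add[OF r(1) r(4)] by blast
qed

lemma std_representable_ideal: "a \<in> I \<Longrightarrow> std_representable a"
  unfolding std_representable_def by (intro exI[of _ 0]) auto

text \<open>Division by an element of \<open>I\<close> with leading monomial \<open>m\<close> replaces a non-standard
  monomial \<open>m\<close> by smaller ones; induction along the well-founded term order.\<close>

lemma std_representable_single:
  "Poly_Mapping.keys m \<subseteq> {1..n} \<Longrightarrow> std_representable (Poly_Mapping.single m c)"
proof (induction m arbitrary: c rule: wf_induct_rule[OF wf_term_order[OF term_order]])
  case (1 m)
  show ?case
  proof (cases "m \<in> S")
    case True
    then show ?thesis
      unfolding std_representable_def using Pn_single[OF "1.prems"] is_ideal_0[OF ideal]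
      by (intro exI[of _ "Poly_Mapping.single m c"]) auto
  next
    case False
    then obtain f where f: "f \<in> I" "f \<noteq> 0" "lm lt1 f = m"
      using "1.prems" by (auto simp: std_monos_def)
    have keys_f: "Poly_Mapping.keys f \<subseteq> {m. Poly_Mapping.keys m \<subseteq> {1..n}}"
      using keys_subset_if_Pn[OF is_ideal_Pn[OF ideal f(1)]] .
    have m_in: "m \<in> Poly_Mapping.keys f"
      and below: "\<forall>m'\<in>Poly_Mapping.keys f. m' \<noteq> m \<longrightarrow> lt1 m' m"
      using lm_in_keys[OF strict_total_lt1 f(2) keys_f] lm_greatest[OF strict_total_lt1 f(2) keys_f] f(3)
      by auto
    define g where "g = mconst (c / Poly_Mapping.lookup f m) * f"
    have g_in: "g \<in> I"
      using is_ideal_mult[OF ideal _ f(1)] by (simp add: g_def)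
    define h where "h = Poly_Mapping.single m c - g"
    have keys_h: "Poly_Mapping.keys h \<subseteq> Poly_Mapping.keys f - {m}"
      using m_in by (auto simp: h_def g_def lookup_minus lookup_mconst_mult lookup_single in_keys_iff
          when_def split: if_splits)
    have "std_representable h"
      using keys_h
    proof (induction h rule: poly_mapping_keys_induct)
      case zero
      show ?case by (rule std_representable_ideal[OF is_ideal_0[OF ideal]])
    next
      case (single m' c')
      then show ?case
        using "1.IH" below keys_f "1.prems" by blast
    qed (rule std_representable_add)
    then show ?thesis
      using std_representable_add std_representable_ideal[OF g_in] h_def by fastforce
  qed
qed

lemma std_representable_all:
  assumes "p \<in> Pn n"
  shows "std_representable p"
  using keys_subset_if_Pn[OF assms]
proof (induction p rule: poly_mapping_keys_induct)
  case zero
  show ?case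
    by (rule std_representable_ideal[OF is_ideal_0[OF ideal]])
next
  case (single m c)
  then show ?case
    by (intro std_representable_single) simp
qed (rule std_representable_add)

lemma std_part_unique:
  assumes "r1 \<in> Pn n" "r2 \<in> Pn n" "r1 - r2 \<in> I"
    and "Poly_Mapping.keys r1 \<subseteq> S" "Poly_Mapping.keys r2 \<subseteq> S"
  shows "r1 = r2"
proof (rule ccontr)
  assume "r1 \<noteq> r2"
  then have "r1 - r2 \<noteq> 0"
    by simp
  then have "lm lt1 (r1 - r2) \<in> Poly_Mapping.keys (r1 - r2)"
    using lm_in_keys[OF strict_total_lt1] keys_subset_if_Pn[OF Pn_diff[OF assms(1,2)]] by blast
  then have "lm lt1 (r1 - r2) \<in> S"
    using keys_diff[of r1 r2] assms(4,5) by auto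
  then show False
    using assms(3) \<open>r1 - r2 \<noteq> 0\<close> by (auto simp: std_monos_def)
qed

lemma nf_ex1:
  assumes "p \<in> Pn n"
  shows "\<exists>!r. r \<in> Pn n \<and> p - r \<in> I \<and> Poly_Mapping.keys r \<subseteq> S"
proof -
  obtain r where r: "r \<in> Pn n \<and> p - r \<in> I \<and> Poly_Mapping.keys r \<subseteq> S"
    using std_representable_all[OF assms] unfolding std_representable_def by blast
  moreover have "r' = r" if "r' \<in> Pn n \<and> p - r' \<in> I \<and> Poly_Mapping.keys r' \<subseteq> S" for r'
  proof -
    have "r' - r = (p - r) - (p - r')"
      by (simp add: algebra_simps)
    then show "r' = r"
      using is_ideal_diff[OF ideal] std_part_unique r that by metis
  qed
  ultimately show ?thesis
    by blast
qed

lemma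
  assumes "p \<in> Pn n"
  shows nf_Pn: "NF p \<in> Pn n"
    and nf_diff_in_ideal: "p - NF p \<in> I"
    and keys_nf: "Poly_Mapping.keys (NF p) \<subseteq> S"
  using theI'[OF nf_ex1[OF assms]] unfolding nf_def by auto

lemma nf_eqI:
  assumes "p \<in> Pn n" "r \<in> Pn n" "p - r \<in> I" "Poly_Mapping.keys r \<subseteq> S"
  shows "NF p = r"
  unfolding nf_def by (rule the1_equality[OF nf_ex1[OF assms(1)]]) (use assms in auto)

lemma nf_add:
  assumes "p \<in> Pn n" "q \<in> Pn n"
  shows "NF (p + q) = NF p + NF q"
proof (rule nf_eqI)
  have "p + q - (NF p + NF q) = (p - NF p) + (q - NF q)"
    by (simp add: algebra_simps)
  then show "p + q - (NF p + NF q) \<in> I"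
    using is_ideal_add[OF ideal] nf_diff_in_ideal assms by metis
  show "Poly_Mapping.keys (NF p + NF q) \<subseteq> S"
    using keys_add[of "NF p" "NF q"] keys_nf assms by blast
qed (use assms in \<open>auto intro: Pn_add nf_Pn\<close>)

lemma nf_mconst_mult:
  assumes "p \<in> Pn n"
  shows "NF (mconst c * p) = mconst c * NF p"
proof (rule nf_eqI)
  have "mconst c * p - mconst c * NF p = mconst c * (p - NF p)"
    by (simp add: algebra_simps)
  then show "mconst c * p - mconst c * NF p \<in> I"
    using is_ideal_mult[OF ideal Pn_mconst nf_diff_in_ideal[OF assms]] by metis
  show "Poly_Mapping.keys (mconst c * NF p) \<subseteq> S"
    using keys_mconst_mult keys_nf[OF assms] by blast
qed (use assms in \<open>auto intro: Pn_mult nf_Pn\<close>)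

lemma nf_ideal: "a \<in> I \<Longrightarrow> NF a = 0"
  by (rule nf_eqI) (use is_ideal_Pn[OF ideal] in auto)

lemma nf_std: "r \<in> Pn n \<Longrightarrow> Poly_Mapping.keys r \<subseteq> S \<Longrightarrow> NF r = r"
  by (rule nf_eqI) (use is_ideal_0[OF ideal] in auto)

lemma nf_mult_nf:
  assumes "q \<in> Pn n" "p \<in> Pn n"
  shows "NF (q * NF p) = NF (q * p)"
proof -
  have qr: "q * NF p \<in> Pn n"
    using Pn_mult assms nf_Pn by blast
  have "q * p - NF (q * NF p) = q * (p - NF p) + (q * NF p - NF (q * NF p))"
    by (simp add: algebra_simps)
  also have "\<dots> \<in> I"
    using is_ideal_add[OF ideal is_ideal_mult[OF ideal assms(1) nf_diff_in_ideal[OF assms(2)]]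
        nf_diff_in_ideal[OF qr]] .
  finally have "q * p - NF (q * NF p) \<in> I" .
  then show ?thesis
    using qr assms by (intro nf_eqI[symmetric] Pn_mult nf_Pn keys_nf)
qed

lemma nf_sum: "(\<And>x. x \<in> A \<Longrightarrow> f x \<in> Pn n) \<Longrightarrow> NF (sum f A) = (\<Sum>x\<in>A. NF (f x))"
  by (induction A rule: infinite_finite_induct) (auto simp: nf_add Pn_sum nf_ideal is_ideal_0[OF ideal])

lemma zero_in_std_monos:
  assumes "S \<noteq> {}"
  shows "0 \<in> S"
proof (rule ccontr)
  assume "0 \<notin> S"
  then obtain f where f: "f \<in> I" "f \<noteq> 0" "lm lt1 f = 0"
    by (auto simp: std_monos_def)
  have keys_f: "Poly_Mapping.keys f \<subseteq> {m. Poly_Mapping.keys m \<subseteq> {1..n}}"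
    using keys_subset_if_Pn[OF is_ideal_Pn[OF ideal f(1)]] .
  have "m' = 0" if "m' \<in> Poly_Mapping.keys f" for m'
  proof (rule ccontr)
    assume "m' \<noteq> 0"
    then have "lt1 m' 0" "lt1 0 m'"
      using lm_greatest[OF strict_total_lt1 f(2) keys_f] f(3) that keys_f
        term_order_zero_less[OF term_order] by auto
    then show False
      using term_order_trans[OF term_order] term_order_irrefl[OF term_order] by blast
  qed
  then have f_const: "f = mconst (Poly_Mapping.lookup f 0)"
    by (intro poly_mapping_eqI) (metis in_keys_iff lookup_single_eq lookup_single_not_eq)
  have "Poly_Mapping.lookup f 0 \<noteq> 0"
    using f(2) f_const by (metis single_zero)
  from assms obtain m where m: "m \<in> S"
    by blast
  have "Poly_Mapping.single m (1 / Poly_Mapping.lookup f 0) * f \<in> I"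
    using is_ideal_mult[OF ideal Pn_single[OF std_monos_keys[OF m]] f(1)] .
  moreover have "Poly_Mapping.single m (1 / Poly_Mapping.lookup f 0) * f = Poly_Mapping.single m 1"
    using \<open>Poly_Mapping.lookup f 0 \<noteq> 0\<close> by (subst f_const) (simp add: mult_single)
  moreover have "lm lt1 (Poly_Mapping.single m (1::'a)) = m"
    by (rule lm_eqI[OF strict_total_lt1]) auto
  ultimately show False
    using m by (auto simp: std_monos_def single_eq_0_iff)
qed

definition "B = canon_basis n lt1 I"

lemma
  shows sorted_B: "sorted_wrt lt1 B"
    and set_B: "set B = S"
proof -
  obtain xs where xs: "sorted_wrt lt1 xs" "set xs = S"
    using sorted_wrt_exists[OF strict_total_lt1 finite_std] by (auto simp: std_monos_def)
  have "B = xs"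
    unfolding B_def canon_basis_def
    by (rule the_equality) (use xs sorted_wrt_unique[OF strict_total_lt1] in auto)
  with xs show "sorted_wrt lt1 B" "set B = S"
    by auto
qed

lemma distinct_B: "distinct B"
  using sorted_wrt_irrefl_distinct[OF term_order_irrefl[OF term_order] sorted_B] .

lemma length_B: "length B = card S"
  using distinct_card[OF distinct_B] set_B by simp

lemma B_nth_0_iff:
  assumes "k < length B"
  shows "B ! k = 0 \<longleftrightarrow> k = 0"
proof -
  have "0 \<in> set B"
    using zero_in_std_monos set_B assms by (metis empty_iff length_pos_if_in_set nth_mem)
  then obtain y ys where B: "B = y # ys"
    by (cases B) auto
  have "y = 0"
  proof (rule ccontr)
    assume "y \<noteq> 0"
    then have "lt1 y 0"
      using sorted_B B \<open>0 \<in> set B\<close> by auto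
    moreover have "lt1 0 y"
      using term_order_zero_less[OF term_order std_monos_keys \<open>y \<noteq> 0\<close>] set_B B by auto
    ultimately show False
      using term_order_trans[OF term_order] term_order_irrefl[OF term_order] by blast
  qed
  then show ?thesis
    using nth_eq_iff_index_eq[OF distinct_B assms, of 0] B by simp
qed

lemma sum_B: "(\<Sum>j<length B. g (B ! j)) = (\<Sum>m\<in>S. g m)"
  using sum.reindex_bij_betw[OF bij_betw_nth[OF distinct_B refl refl], of g] set_B by simp

lemma std_poly_expansion:
  fixes r :: "'a mpoly"
  assumes "Poly_Mapping.keys r \<subseteq> S"
  shows "(\<Sum>j<length B. mconst (Poly_Mapping.lookup r (B ! j)) * Poly_Mapping.single (B ! j) 1) = r"
proof -
  have "(\<Sum>j<length B. mconst (Poly_Mapping.lookup r (B ! j)) * Poly_Mapping.single (B ! j) 1)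
      = (\<Sum>j<length B. (\<lambda>m. Poly_Mapping.single m (Poly_Mapping.lookup r m)) (B ! j))"
    by (simp add: mult_single)
  also have "\<dots> = (\<Sum>m\<in>S. Poly_Mapping.single m (Poly_Mapping.lookup r m))"
    by (rule sum_B)
  also have "\<dots> = (\<Sum>m\<in>Poly_Mapping.keys r. Poly_Mapping.single m (Poly_Mapping.lookup r m))"
    by (rule sum.mono_neutral_right[OF finite_std assms]) (auto simp: in_keys_iff)
  finally show ?thesis
    by (simp add: sum_single_lookup)
qed

definition coords :: "'a mpoly \<Rightarrow> 'a vec" where
  "coords p = vec (length B) (\<lambda>k. Poly_Mapping.lookup (NF p) (B ! k))"

lemma coords_carrier: "coords p \<in> carrier_vec (length B)"
  unfolding coords_def by simp

lemma mult_mat_carrier: "mult_mat n lt1 I i \<in> carrier_mat (length B) (length B)"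
  unfolding mult_mat_def Let_def B_def by simp

lemma coords_one:
  assumes "S \<noteq> {}"
  shows "coords 1 = unit_vec (length B) 0"
proof -
  have "NF 1 = 1"
    using zero_in_std_monos[OF assms] by (intro nf_std) auto
  then show ?thesis
    unfolding coords_def unit_vec_def by (intro eq_vecI) (auto simp: lookup_one B_nth_0_iff)
qed

lemma mult_mat_mult_coords:
  assumes i: "i \<in> {1..n}" and p: "p \<in> Pn n"
  shows "mult_mat n lt1 I i *\<^sub>v coords p = coords (Var i * p)"
proof (rule eq_vecI)
  fix k
  assume "k < dim_vec (coords (Var i * p))"
  then have k: "k < length B"
    by (simp add: coords_def)
  have BV: "Poly_Mapping.single (B ! j) 1 * Var i \<in> Pn n" if "j < length B" for j
  proof -
    have "B ! j \<in> S"
      using that set_B nth_mem by blast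
    then show ?thesis
      using Pn_mult[OF Pn_single[OF std_monos_keys] Pn_Var[OF i]] by blast
  qed
  have "NF (Var i * p) = NF (Var i * NF p)"
    using nf_mult_nf[OF Pn_Var[OF i] p] by simp
  also have "Var i * NF p
      = (\<Sum>j<length B. mconst (Poly_Mapping.lookup (NF p) (B ! j)) * (Poly_Mapping.single (B ! j) 1 * Var i))"
    by (subst (1) std_poly_expansion[OF keys_nf[OF p], symmetric])
      (simp add: sum_distrib_left algebra_simps)
  also have "NF \<dots> = (\<Sum>j<length B.
      NF (mconst (Poly_Mapping.lookup (NF p) (B ! j)) * (Poly_Mapping.single (B ! j) 1 * Var i)))"
    by (rule nf_sum) (simp add: Pn_mult[OF Pn_mconst BV])
  also have "\<dots> = (\<Sum>j<length B.
      mconst (Poly_Mapping.lookup (NF p) (B ! j)) * NF (Poly_Mapping.single (B ! j) 1 * Var i))"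
    by (rule sum.cong) (simp_all add: nf_mconst_mult BV)
  finally show "(mult_mat n lt1 I i *\<^sub>v coords p) $ k = coords (Var i * p) $ k"
    using k by (simp add: mult_mat_def Let_def B_def[symmetric] coords_def scalar_prod_def
        lookup_sum lookup_mconst_mult mult.commute atLeast0LessThan)
qed (simp add: mult_mat_def Let_def B_def[symmetric] coords_def)

lemma mult_mat_pow_mult_coords:
  assumes "1 \<le> n" "p \<in> Pn n"
  shows "mult_mat n lt1 I 1 ^\<^sub>m j *\<^sub>v coords p = coords (Var 1 ^ j * p)"
  using assms(2)
proof (induction j arbitrary: p)
  case 0
  have "dim_row (mult_mat n lt1 I 1) = length B"
    using mult_mat_carrier by blast
  then show ?case
    using coords_carrier by simp
next
  case (Suc j)
  have "mult_mat n lt1 I 1 ^\<^sub>m Suc j *\<^sub>v coords p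
      = mult_mat n lt1 I 1 ^\<^sub>m j *\<^sub>v (mult_mat n lt1 I 1 *\<^sub>v coords p)"
    using assoc_mult_mat_vec[OF pow_carrier_mat[OF mult_mat_carrier] mult_mat_carrier coords_carrier]
    by simp
  also have "\<dots> = coords (Var 1 ^ j * (Var 1 * p))"
    using Suc assms(1) by (simp add: mult_mat_mult_coords Pn_mult Pn_Var)
  finally show ?case
    by (simp add: algebra_simps)
qed

definition L :: "'a vec \<Rightarrow> 'a mpoly \<Rightarrow> 'a" where
  "L w p = (\<Sum>k<length B. w $ k * Poly_Mapping.lookup (NF p) (B ! k))"

lemma scalar_prod_coords: "dim_vec w = length B \<Longrightarrow> w \<bullet> coords p = L w p"
  unfolding L_def scalar_prod_def coords_def by (simp add: atLeast0LessThan)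

lemma L_add: "p \<in> Pn n \<Longrightarrow> q \<in> Pn n \<Longrightarrow> L w (p + q) = L w p + L w q"
  unfolding L_def by (simp add: nf_add lookup_add ring_distribs sum.distrib)

lemma L_mconst_mult: "p \<in> Pn n \<Longrightarrow> L w (mconst c * p) = c * L w p"
  unfolding L_def by (simp add: nf_mconst_mult lookup_mconst_mult sum_distrib_left mult.left_commute)

lemma L_ideal: "a \<in> I \<Longrightarrow> L w a = 0"
  unfolding L_def by (simp add: nf_ideal)

lemma L_sum: "(\<And>x. x \<in> A \<Longrightarrow> f x \<in> Pn n) \<Longrightarrow> L w (sum f A) = (\<Sum>x\<in>A. L w (f x))"
  by (induction A rule: infinite_finite_induct)
    (auto simp: L_add Pn_sum L_ideal is_ideal_0[OF ideal])

lemma L_cong_ideal: "p \<in> Pn n \<Longrightarrow> q \<in> Pn n \<Longrightarrow> p - q \<in> I \<Longrightarrow> L w p = L w q"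
  using L_add[of "p - q" q w] L_ideal[of "p - q" w] Pn_diff by fastforce

lemma scalar_prod_mult_mat_pow_unit:
  assumes "1 \<le> n" "dim_vec w = card S" "S \<noteq> {}"
  shows "w \<bullet> (mult_mat n lt1 I 1 ^\<^sub>m j *\<^sub>v unit_vec (card S) 0) = L w (Var 1 ^ j)"
  using assms mult_mat_pow_mult_coords[of 1 j] coords_one scalar_prod_coords length_B by simp

lemma scalar_prod_mult_mat_pow_mult_unit:
  assumes "1 \<le> n" "dim_vec w = card S" "S \<noteq> {}" "i \<in> {1..n}"
  shows "w \<bullet> ((mult_mat n lt1 I 1 ^\<^sub>m j * mult_mat n lt1 I i) *\<^sub>v unit_vec (card S) 0)
    = L w (Var 1 ^ j * Var i)"
proof -
  have "(mult_mat n lt1 I 1 ^\<^sub>m j * mult_mat n lt1 I i) *\<^sub>v coords 1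
      = mult_mat n lt1 I 1 ^\<^sub>m j *\<^sub>v (mult_mat n lt1 I i *\<^sub>v coords 1)"
    by (rule assoc_mult_mat_vec[OF pow_carrier_mat[OF mult_mat_carrier] mult_mat_carrier coords_carrier])
  also have "\<dots> = coords (Var 1 ^ j * Var i)"
    using mult_mat_mult_coords[OF assms(4) Pn_one] mult_mat_pow_mult_coords[OF assms(1) Pn_Var[OF assms(4)]]
    by simp
  finally show ?thesis
    using assms coords_one scalar_prod_coords length_B by simp
qed

end

section \<open>Univariate polynomials in \<open>x\<^sub>1\<close>\<close>

text \<open>Keep \<open>1 :: nat\<close> from being rewritten to \<open>Suc 0\<close>, so that simplification rules about
  \<open>x\<^sub>1 = Var 1\<close> and the monomials \<open>Poly_Mapping.single 1 k\<close> stay applicable.\<close>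

declare One_nat_def [simp del]

interpretation mconst_hom: map_poly_inj_comm_ring_hom "mconst :: 'a::comm_ring_1 \<Rightarrow> 'a mpoly"
  by unfold_locales (auto simp: mult_single single_add single_eq_0_iff)

lemma Var_power: "Var v ^ k = (Poly_Mapping.single (Poly_Mapping.single v k) 1 :: 'a::comm_ring_1 mpoly)"
proof (induction k)
  case (Suc k)
  then show ?case
    unfolding Var_def by (simp add: mult_single single_add[symmetric] plus_1_eq_Suc)
qed simp

lemma single_eq_single_iff [simp]:
  "Poly_Mapping.single v k = Poly_Mapping.single v k' \<longleftrightarrow> k = (k' :: 'b::zero)"
  by (metis lookup_single_eq)

lemma lookup_Var:
  "Poly_Mapping.lookup (Var i :: 'a::comm_ring_1 mpoly) m = (if m = Poly_Mapping.single i 1 then 1 else 0)"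
  by (simp add: Var_def lookup_single)

lemma single_X1_power:
  "Poly_Mapping.single (Poly_Mapping.single 1 k) c = mconst c * (Var 1 ^ k :: 'a::comm_ring_1 mpoly)"
  by (simp add: Var_power mult_single)

lemma uni_eq_poly: "uni P = poly (map_poly mconst P) (Var 1)"
  unfolding uni_def single_X1_power poly_altdef
  by (simp add: degree_map_poly single_eq_0_iff coeff_map_poly)

lemma uni_add: "uni (P + Q) = uni P + uni Q"
  unfolding uni_eq_poly by (simp add: mconst_hom.hom_add)

lemma uni_mult: "uni (P * Q) = uni P * uni Q"
  unfolding uni_eq_poly by (simp add: mconst_hom.hom_mult)

lemma uni_0 [simp]: "uni 0 = 0"
  unfolding uni_eq_poly by simp

lemma uni_const: "uni [:c:] = mconst c"
  unfolding uni_def by simp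

lemma uni_X: "uni [:0, 1:] = Var 1"
  unfolding uni_eq_poly by simp

lemma uni_eq_sum_lessThan:
  assumes "degree P < N"
  shows "uni P = (\<Sum>k<N. mconst (coeff P k) * Var 1 ^ k)"
  unfolding uni_def single_X1_power
  by (rule sum.mono_neutral_left) (use assms in \<open>auto simp: coeff_eq_0\<close>)

lemma lookup_uni:
  "Poly_Mapping.lookup (uni P) m =
    (if m = Poly_Mapping.single 1 (Poly_Mapping.lookup m 1) then coeff P (Poly_Mapping.lookup m 1) else 0)"
proof -
  have single_eq_iff: "Poly_Mapping.single 1 k = m \<longleftrightarrow>
      m = Poly_Mapping.single 1 (Poly_Mapping.lookup m 1) \<and> k = Poly_Mapping.lookup m 1" for k
    by (metis lookup_single_eq)
  have "Poly_Mapping.lookup (uni P) m = (\<Sum>k\<le>degree P. if Poly_Mapping.single 1 k = m then coeff P k else 0)"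
    unfolding uni_def by (simp add: lookup_sum lookup_single when_def)
  also have "\<dots> = (if m = Poly_Mapping.single 1 (Poly_Mapping.lookup m 1) then coeff P (Poly_Mapping.lookup m 1) else 0)"
    unfolding single_eq_iff by (auto simp: coeff_eq_0)
  finally show ?thesis .
qed

lemma lookup_uni_single: "Poly_Mapping.lookup (uni P) (Poly_Mapping.single 1 k) = coeff P k"
  unfolding lookup_uni by simp

lemma lookup_uni_not_X1_power:
  "(\<And>k. m \<noteq> Poly_Mapping.single 1 k) \<Longrightarrow> Poly_Mapping.lookup (uni P) m = 0"
  unfolding lookup_uni by metis

lemma keys_uni:
  assumes "m \<in> Poly_Mapping.keys (uni P)"
  obtains k where "m = Poly_Mapping.single 1 k" "k \<le> degree P"
proof -
  obtain k where k: "m = Poly_Mapping.single 1 k"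
    using assms lookup_uni_not_X1_power by (metis in_keys_iff)
  then have "coeff P k \<noteq> 0"
    using assms by (simp add: in_keys_iff lookup_uni)
  with k show ?thesis
    using le_degree that by blast
qed

lemma single_eq_prod_Var_power:
  "Poly_Mapping.single m 1 = (\<Prod>v\<in>Poly_Mapping.keys m. Var v ^ Poly_Mapping.lookup m v :: 'a::comm_ring_1 mpoly)"
proof -
  have "(\<Prod>v\<in>A. Poly_Mapping.single (g v) 1) = (Poly_Mapping.single (\<Sum>v\<in>A. g v) 1 :: 'a mpoly)"
    if "finite A" for A and g :: "nat \<Rightarrow> mono"
    using that by (induction A rule: finite_induct) (auto simp: mult_single)
  then show ?thesis
    unfolding Var_power by (simp add: sum_single_lookup)
qed

definition poly_upto :: "nat \<Rightarrow> (nat \<Rightarrow> 'a::zero) \<Rightarrow> 'a poly" where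
  "poly_upto N g = Poly (map g [0..<N])"

lemma coeff_poly_upto: "coeff (poly_upto N g) k = (if k < N then g k else 0)"
  by (simp add: poly_upto_def nth_default_def)

lemma degree_poly_upto:
  assumes "0 < N"
  shows "degree (poly_upto N g) < N"
proof -
  have "degree (poly_upto N g) \<le> N - 1"
    by (rule degree_le) (auto simp: coeff_poly_upto)
  with assms show ?thesis
    by simp
qed

lemma poly_upto_eq_0_iff: "poly_upto N g = 0 \<longleftrightarrow> (\<forall>k<N. g k = 0)"
  by (metis coeff_0 coeff_poly_upto leading_coeff_0_iff degree_0 poly_eq_iff)

lemma monomial_eq_X1_power:
  fixes m :: mono
  assumes "Poly_Mapping.keys m \<subseteq> {1..n}" "\<forall>v\<in>{2..n}. Poly_Mapping.lookup m v = 0"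
  shows "m = Poly_Mapping.single 1 (Poly_Mapping.lookup m 1)"
proof (rule poly_mapping_eqI)
  fix u
  show "Poly_Mapping.lookup m u = Poly_Mapping.lookup (Poly_Mapping.single 1 (Poly_Mapping.lookup m 1)) u"
  proof (cases "u = 1")
    case False
    have "Poly_Mapping.lookup m u = 0"
    proof (rule ccontr)
      assume "Poly_Mapping.lookup m u \<noteq> 0"
      then have "u \<in> Poly_Mapping.keys m"
        by (simp add: in_keys_iff)
      then have "u \<in> {1..n}"
        using assms(1) by blast
      then have "u \<in> {2..n}"
        using False by auto
      with \<open>Poly_Mapping.lookup m u \<noteq> 0\<close> show False
        using assms(2) by auto
    qed
    with False show ?thesis
      by (simp add: lookup_single)
  qed simp
qed

lemma lex_less_X1_power:
  assumes "Poly_Mapping.keys m \<subseteq> {1..n}" "lex m (Poly_Mapping.single 1 e)"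
  shows "\<exists>k<e. m = Poly_Mapping.single 1 k"
proof -
  obtain k where k: "Poly_Mapping.lookup m k < Poly_Mapping.lookup (Poly_Mapping.single 1 e) k"
    "\<forall>j>k. Poly_Mapping.lookup m j = Poly_Mapping.lookup (Poly_Mapping.single 1 e) j"
    using assms(2) unfolding lex_def by blast
  then have "k = 1"
    by (auto simp: lookup_single when_def split: if_splits)
  then have "\<forall>v\<in>{2..n}. Poly_Mapping.lookup m v = 0"
    using k(2) by (auto simp: lookup_single)
  then have "m = Poly_Mapping.single 1 (Poly_Mapping.lookup m 1)"
    using monomial_eq_X1_power[OF assms(1)] by blast
  moreover have "Poly_Mapping.lookup m 1 < e"
    using k(1) \<open>k = 1\<close> by (simp add: lookup_single)
  ultimately show ?thesis
    by blast
qed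

lemma uni_of_keys_X1_power:
  assumes "\<forall>m\<in>Poly_Mapping.keys h. \<exists>k<N. m = Poly_Mapping.single 1 k"
  shows "h = uni (poly_upto N (\<lambda>k. Poly_Mapping.lookup h (Poly_Mapping.single 1 k)))"
proof (rule poly_mapping_eqI)
  fix u
  show "Poly_Mapping.lookup h u = Poly_Mapping.lookup (uni (poly_upto N (\<lambda>k. Poly_Mapping.lookup h (Poly_Mapping.single 1 k)))) u"
  proof (cases "\<exists>k. u = Poly_Mapping.single 1 k")
    case True
    then obtain k where u: "u = Poly_Mapping.single 1 k"
      by blast
    have "k \<ge> N \<Longrightarrow> u \<notin> Poly_Mapping.keys h"
      using assms u by (metis lookup_single_eq not_le)
    then show ?thesis
      using u by (auto simp: lookup_uni_single coeff_poly_upto in_keys_iff)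
  next
    case False
    then have "u \<notin> Poly_Mapping.keys h"
      using assms by blast
    then show ?thesis
      using lookup_uni_not_X1_power[of u] False by (auto simp: in_keys_iff)
  qed
qed

lemma lm_lex_uni:
  assumes "coeff P (degree P) \<noteq> 0"
  shows "lm lex (uni P) = Poly_Mapping.single 1 (degree P)"
proof (rule lm_eqI[OF strict_total_on_lex])
  show "Poly_Mapping.single 1 (degree P) \<in> Poly_Mapping.keys (uni P)"
    using assms by (simp add: in_keys_iff lookup_uni_single)
  show "\<forall>m'\<in>Poly_Mapping.keys (uni P). m' \<noteq> Poly_Mapping.single 1 (degree P) \<longrightarrow> lex m' (Poly_Mapping.single 1 (degree P))"
  proof (intro ballI impI)
    fix m'
    assume "m' \<in> Poly_Mapping.keys (uni P)" "m' \<noteq> Poly_Mapping.single 1 (degree P)"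
    then obtain k where "m' = Poly_Mapping.single 1 k" "k < degree P"
      by (elim keys_uni) auto
    then show "lex m' (Poly_Mapping.single 1 (degree P))"
      unfolding lex_def by (intro exI[of _ 1]) (auto simp: lookup_single)
  qed
qed

lemma mdvd_single_single:
  assumes "mdvd (Poly_Mapping.single a x) (Poly_Mapping.single b y)" "0 < x"
  shows "a = b \<and> x \<le> y"
  using assms(1)[unfolded mdvd_def, rule_format, of a] assms(2)
  by (cases "a = b") (auto simp: lookup_single)

section \<open>Linear recurrences and linear dependence\<close>

lemma recurrence_vanishes:
  fixes u :: "nat \<Rightarrow> 'a::field"
  assumes P: "P \<noteq> 0" and rec: "\<forall>j. (\<Sum>k\<le>degree P. coeff P k * u (k + j)) = 0"
    and init: "\<forall>j<N. u j = 0" and deg: "degree P \<le> N"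
  shows "u j = 0"
proof (induction j rule: less_induct)
  case (less j)
  show ?case
  proof (cases "j < N")
    case False
    define j0 where "j0 = j - degree P"
    have j: "j = degree P + j0"
      using False deg by (simp add: j0_def)
    have "0 = (\<Sum>k\<le>degree P. coeff P k * u (k + j0))"
      using rec by simp
    also have "\<dots> = (\<Sum>k<degree P. coeff P k * u (k + j0)) + coeff P (degree P) * u j"
      by (simp add: lessThan_Suc_atMost[symmetric] j add.commute)
    also have "(\<Sum>k<degree P. coeff P k * u (k + j0)) = 0"
      using less j by (intro sum.neutral) auto
    finally show ?thesis
      using P by simp
  qed (use init in simp)
qed

lemma exists_nontrivial_relation:
  fixes v :: "nat \<Rightarrow> 'a::field vec"
  assumes "\<And>j. j \<le> N \<Longrightarrow> v j \<in> carrier_vec N"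
  shows "\<exists>c. (\<exists>j\<le>N. c j \<noteq> 0) \<and> (\<forall>i<N. (\<Sum>j\<le>N. c j * v j $ i) = 0)"
proof -
  define M where "M = mat\<^sub>r (Suc N) (Suc N) (\<lambda>i. if i = N then 0\<^sub>v (Suc N) else vec (Suc N) (\<lambda>j. v j $ i))"
  have M: "M \<in> carrier_mat (Suc N) (Suc N)"
    by (simp add: M_def)
  have "det M = 0"
    unfolding M_def by (rule det_row_0) auto
  then obtain c where c: "c \<in> carrier_vec (Suc N)" "c \<noteq> 0\<^sub>v (Suc N)" "M *\<^sub>v c = 0\<^sub>v (Suc N)"
    using det_0_iff_vec_prod_zero[OF M] by blast
  have "\<exists>j\<le>N. c $ j \<noteq> 0"
    using c(1,2) by (metis carrier_vecD eq_vecI index_zero_vec less_Suc_eq_le dim_vec)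
  moreover have "(\<Sum>j\<le>N. c $ j * v j $ i) = 0" if "i < N" for i
  proof -
    have "(M *\<^sub>v c) $ i = 0"
      using c(3) that by simp
    then show ?thesis
      using c(1) that by (simp add: M_def scalar_prod_def atLeast0LessThan lessThan_Suc_atMost mult.commute)
  qed
  ultimately show ?thesis
    by blast
qed

context zero_dim_ideal
begin

text \<open>The \<open>card S + 1\<close> coordinate vectors of \<open>1, x\<^sub>1, \<dots>, x\<^sub>1\<^sup>card S\<close> are linearly dependent.\<close>

lemma exists_univariate_in_ideal:
  assumes "1 \<le> n"
  shows "\<exists>P. P \<noteq> 0 \<and> degree P \<le> card S \<and> uni P \<in> I"
proof -
  let ?N = "length B"
  note Pn_X_power = Pn_X1_power[OF assms]
  obtain c where c: "\<exists>j\<le>?N. c j \<noteq> 0" "\<forall>i<?N. (\<Sum>j\<le>?N. c j * coords (Var 1 ^ j) $ i) = 0"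
    using exists_nontrivial_relation[of ?N "\<lambda>j. coords (Var 1 ^ j)"] coords_carrier by blast
  define P where "P = poly_upto (Suc ?N) c"
  have deg: "degree P < Suc ?N"
    unfolding P_def by (rule degree_poly_upto) simp
  have "P \<noteq> 0"
    using c(1) by (auto simp: P_def poly_upto_eq_0_iff less_Suc_eq_le)
  have "NF (uni P) = (\<Sum>j<Suc ?N. NF (mconst (coeff P j) * Var 1 ^ j))"
    unfolding uni_eq_sum_lessThan[OF deg] by (rule nf_sum) (simp add: Pn_mult[OF Pn_mconst Pn_X_power])
  also have "\<dots> = (\<Sum>j<Suc ?N. mconst (coeff P j) * NF (Var 1 ^ j))"
    by (rule sum.cong) (simp_all add: nf_mconst_mult Pn_X_power)
  finally have "NF (uni P) = (\<Sum>j<Suc ?N. mconst (coeff P j) * NF (Var 1 ^ j))" .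
  then have "Poly_Mapping.lookup (NF (uni P)) (B ! i) = 0" if "i < ?N" for i
    using c(2) that
    by (simp add: lookup_sum lookup_mconst_mult P_def coeff_poly_upto coords_def lessThan_Suc_atMost mult.commute)
  then have "NF (uni P) = 0"
    using std_poly_expansion[OF keys_nf[OF Pn_uni[OF assms, of P]]] by simp
  then have "uni P \<in> I"
    using nf_diff_in_ideal[OF Pn_uni[OF assms, of P]] by simp
  with \<open>P \<noteq> 0\<close> deg show ?thesis
    using length_B by (intro exI[of _ P]) auto
qed

end

section \<open>The ideal in shape position and the linear form\<close>

locale shape_position_form = zero_dim_ideal n lt1 I for n lt1 and I :: "'a::field mpoly set" +
  fixes w :: "'a vec" and f :: "nat \<Rightarrow> 'a poly" and ft :: "'a poly" and d :: nat
  assumes n_pos: "1 \<le> n"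
    and w_carrier: "w \<in> carrier_vec (card (std_monos n lt1 I))"
    and shape: "\<forall>i\<in>{2..n}. Var i - uni (f i) \<in> I"
    and minpoly: "is_minpoly_seq
      (\<lambda>j. w \<bullet> (mult_mat n lt1 I 1 ^\<^sub>m j *\<^sub>v unit_vec (card (std_monos n lt1 I)) 0))
      (2 * card (std_monos n lt1 I)) ft"
    and d_def: "d = degree ft" and d_pos: "0 < d" and d_less: "d < card (std_monos n lt1 I)"
begin

abbreviation "X \<equiv> Var 1 :: 'a mpoly"
abbreviation "a j \<equiv> L w (X ^ j)"

lemma std_monos_nonempty: "S \<noteq> {}"
  using d_less by auto

lemma Pn_X_power: "X ^ k \<in> Pn n"
  using Pn_X1_power[OF n_pos] .

lemma uni_in_Pn [simp]: "uni P \<in> Pn n"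
  using Pn_uni[OF n_pos] .

lemma minpoly_L: "is_minpoly_seq (\<lambda>j. a j) (2 * card S) ft"
  using minpoly w_carrier scalar_prod_mult_mat_pow_unit[OF n_pos _ std_monos_nonempty] by simp

lemma ft_monic: "lead_coeff ft = 1"
  using minpoly_L by (simp add: is_minpoly_seq_def)

lemma ft_nonzero: "ft \<noteq> 0"
  using ft_monic by auto

lemma L_mult_uni:
  assumes "q \<in> Pn n" "degree P < N"
  shows "L w (q * uni P) = (\<Sum>k<N. coeff P k * L w (q * X ^ k))"
proof -
  have "q * uni P = (\<Sum>k<N. mconst (coeff P k) * (q * X ^ k))"
    unfolding uni_eq_sum_lessThan[OF assms(2)] by (simp add: sum_distrib_left mult.left_commute)
  then have "L w (q * uni P) = (\<Sum>k<N. L w (mconst (coeff P k) * (q * X ^ k)))"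
    using Pn_mult[OF Pn_mconst Pn_mult[OF assms(1) Pn_X_power]] by (simp add: L_sum)
  then show ?thesis
    using Pn_mult[OF assms(1) Pn_X_power] by (simp add: L_mconst_mult)
qed

lemma L_X_power_mult_uni:
  assumes "degree P < N"
  shows "L w (X ^ j * uni P) = (\<Sum>k<N. coeff P k * a (k + j))"
  using L_mult_uni[OF Pn_X_power assms] by (simp add: power_add[symmetric] add.commute)

lemma annihilates_iff_L:
  "annihilates (\<lambda>j. a j) N P \<longleftrightarrow> (\<forall>j. j + degree P < N \<longrightarrow> L w (X ^ j * uni P) = 0)"
  unfolding annihilates_def L_X_power_mult_uni[OF lessI] lessThan_Suc_atMost ..

lemma L_X_power_mult_ft_initial: "j + d < 2 * card S \<Longrightarrow> L w (X ^ j * uni ft) = 0"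
  using minpoly_L unfolding is_minpoly_seq_def annihilates_iff_L d_def by blast

lemma d_le_degree:
  "Q \<noteq> 0 \<Longrightarrow> \<forall>j. L w (X ^ j * uni Q) = 0 \<Longrightarrow> d \<le> degree Q"
  using minpoly_L unfolding is_minpoly_seq_def annihilates_iff_L d_def by blast

text \<open>The sequence \<open>L(x\<^sub>1\<^sup>j ft)\<close> satisfies the recurrence of a univariate \<open>P \<in> I\<close> of degree
  \<open>\<le> card S\<close> and vanishes for \<open>j < 2 card S - d\<close>, since \<open>ft\<close> annihilates \<open>a\<close> up to \<open>2 card S\<close>.\<close>

lemma L_X_power_mult_ft: "L w (X ^ j * uni ft) = 0"
proof -
  obtain P where P: "P \<noteq> 0" "degree P \<le> card S" "uni P \<in> I"
    using exists_univariate_in_ideal[OF n_pos] by blast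
  define u where "u j = L w (X ^ j * uni ft)" for j
  have "(\<Sum>k\<le>degree P. coeff P k * u (k + j)) = 0" for j
  proof -
    have "(\<Sum>k\<le>degree P. coeff P k * u (k + j))
        = (\<Sum>k<Suc (degree P). coeff P k * L w ((X ^ j * uni ft) * X ^ k))"
      by (simp add: u_def lessThan_Suc_atMost power_add algebra_simps)
    also have "\<dots> = L w ((X ^ j * uni ft) * uni P)"
      by (rule L_mult_uni[symmetric, OF Pn_mult[OF Pn_X_power uni_in_Pn]]) simp
    also have "\<dots> = 0"
      using L_ideal[OF is_ideal_mult[OF ideal Pn_mult[OF Pn_X_power uni_in_Pn] P(3)]] .
    finally show ?thesis .
  qed
  then have "u j = 0"
    using recurrence_vanishes[OF P(1), of u "2 * card S - d"] L_X_power_mult_ft_initial P(2) d_less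
    by (auto simp: u_def)
  then show ?thesis
    by (simp add: u_def)
qed

definition univariate_mod_ideal :: "'a mpoly \<Rightarrow> bool" where
  "univariate_mod_ideal p \<longleftrightarrow> p \<in> Pn n \<and> (\<exists>Q. p - uni Q \<in> I)"

lemma univariate_mod_ideal_add:
  assumes "univariate_mod_ideal p" "univariate_mod_ideal q"
  shows "univariate_mod_ideal (p + q)"
proof -
  obtain Q1 Q2 where "p - uni Q1 \<in> I" "q - uni Q2 \<in> I"
    using assms unfolding univariate_mod_ideal_def by blast
  moreover have "(p + q) - uni (Q1 + Q2) = (p - uni Q1) + (q - uni Q2)"
    by (simp add: uni_add algebra_simps)
  ultimately show ?thesis
    using assms is_ideal_add[OF ideal] Pn_add unfolding univariate_mod_ideal_def by metis
qed

lemma univariate_mod_ideal_mult: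
  assumes "univariate_mod_ideal p" "univariate_mod_ideal q"
  shows "univariate_mod_ideal (p * q)"
proof -
  obtain Q1 Q2 where Q: "p - uni Q1 \<in> I" "q - uni Q2 \<in> I"
    using assms unfolding univariate_mod_ideal_def by blast
  have pq: "p \<in> Pn n" "q \<in> Pn n"
    using assms unfolding univariate_mod_ideal_def by auto
  have "p * q - uni (Q1 * Q2) = q * (p - uni Q1) + uni Q1 * (q - uni Q2)"
    by (simp add: uni_mult algebra_simps)
  also have "\<dots> \<in> I"
    using is_ideal_add[OF ideal is_ideal_mult[OF ideal pq(2) Q(1)] is_ideal_mult[OF ideal uni_in_Pn Q(2)]] .
  finally show ?thesis
    using pq Pn_mult unfolding univariate_mod_ideal_def by blast
qed

lemma univariate_mod_ideal_mconst: "univariate_mod_ideal (mconst c)"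
  unfolding univariate_mod_ideal_def using uni_const[of c] is_ideal_0[OF ideal]
  by (intro conjI exI[of _ "[:c:]"]) auto

lemma univariate_mod_ideal_Var:
  assumes "i \<in> {1..n}"
  shows "univariate_mod_ideal (Var i)"
proof (cases "i = 1")
  case True
  then have "Var i - uni [:0, 1:] \<in> I"
    by (simp add: uni_X is_ideal_0[OF ideal])
  then show ?thesis
    unfolding univariate_mod_ideal_def using Pn_Var[OF assms] by blast
next
  case False
  then show ?thesis
    unfolding univariate_mod_ideal_def using assms shape Pn_Var[OF assms] by auto
qed

lemma univariate_mod_ideal_one: "univariate_mod_ideal 1"
  using univariate_mod_ideal_mconst[of 1] by simp

lemma univariate_mod_ideal_prod_Var_power:
  "A \<subseteq> {1..n} \<Longrightarrow> univariate_mod_ideal (\<Prod>v\<in>A. Var v ^ e v)"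
proof (induction A rule: infinite_finite_induct)
  case (insert v A)
  have "univariate_mod_ideal (Var v ^ k)" for k
    using insert.prems univariate_mod_ideal_Var[of v]
    by (induction k) (auto intro: univariate_mod_ideal_mult univariate_mod_ideal_one)
  with insert show ?case
    by (auto intro: univariate_mod_ideal_mult)
qed (auto intro: univariate_mod_ideal_one)

lemma exists_univariate_mod_ideal:
  assumes "p \<in> Pn n"
  shows "\<exists>Q. p - uni Q \<in> I"
proof -
  have "univariate_mod_ideal p"
    using keys_subset_if_Pn[OF assms]
  proof (induction p rule: poly_mapping_keys_induct)
    case zero
    show ?case
      using univariate_mod_ideal_mconst[of 0] by simp
  next
    case (single m c)
    then have "univariate_mod_ideal (mconst c * Poly_Mapping.single m 1)"
      unfolding single_eq_prod_Var_power
      by (intro univariate_mod_ideal_mult univariate_mod_ideal_mconst univariate_mod_ideal_prod_Var_power)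
        auto
    then show ?case
      by (simp add: mult_single)
  qed (rule univariate_mod_ideal_add)
  then show ?thesis
    unfolding univariate_mod_ideal_def by blast
qed

end

context shape_position_form
begin

lemma L_mult_ft:
  assumes "r \<in> Pn n"
  shows "L w (r * uni ft) = 0"
proof -
  obtain Q where Q: "r - uni Q \<in> I"
    using exists_univariate_mod_ideal[OF assms] by blast
  have "r * uni ft - uni Q * uni ft = uni ft * (r - uni Q)"
    by (simp add: algebra_simps)
  then have "L w (r * uni ft) = L w (uni Q * uni ft)"
    using is_ideal_mult[OF ideal uni_in_Pn Q]
    by (intro L_cong_ideal Pn_mult[OF assms uni_in_Pn] Pn_mult[OF uni_in_Pn uni_in_Pn]) simp
  also have "\<dots> = L w (uni (ft * Q))"
    by (simp add: uni_mult mult.commute)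
  also have "\<dots> = (\<Sum>k<Suc (degree Q). coeff Q k * L w (X ^ k * uni ft))"
    using L_mult_uni[OF uni_in_Pn, of Q "Suc (degree Q)" ft] by (simp add: uni_mult mult.commute)
  also have "\<dots> = 0"
    by (simp only: L_X_power_mult_ft mult_zero_right sum.neutral_const)
  finally show ?thesis .
qed

lemma L_X_power_mult_ideal_add:
  assumes "h \<in> ideal_add n I (uni ft)"
  shows "L w (X ^ j * h) = 0"
proof -
  obtain b q where h: "h = b + q * uni ft" "b \<in> I" "q \<in> Pn n"
    using assms unfolding ideal_add_def by blast
  have "X ^ j * h = X ^ j * b + (X ^ j * q) * uni ft"
    by (simp add: h(1) algebra_simps)
  then have "L w (X ^ j * h) = L w (X ^ j * b) + L w ((X ^ j * q) * uni ft)"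
    using L_add[OF Pn_mult[OF Pn_X_power is_ideal_Pn[OF ideal h(2)]]
        Pn_mult[OF Pn_mult[OF Pn_X_power h(3)] uni_in_Pn]] by simp
  also have "\<dots> = 0"
    using L_ideal[OF is_ideal_mult[OF ideal Pn_X_power h(2)]] L_mult_ft[OF Pn_mult[OF Pn_X_power h(3)]]
    by simp
  finally show ?thesis .
qed

lemma uni_eq_0_if_L_vanishes:
  assumes "degree H < d" "\<forall>j. L w (X ^ j * uni H) = 0"
  shows "H = 0"
proof (rule ccontr)
  assume "H \<noteq> 0"
  then have "d \<le> degree H"
    using d_le_degree assms(2) by blast
  with assms(1) show False
    by simp
qed

lemma hankel_injective:
  assumes y: "y \<in> carrier_vec d" and h: "\<forall>j<d. (\<Sum>k<d. y $ k * a (k + j)) = 0"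
  shows "y = 0\<^sub>v d"
proof -
  define Y where "Y = poly_upto d (\<lambda>k. y $ k)"
  have deg: "degree Y < d"
    unfolding Y_def using d_pos by (rule degree_poly_upto)
  define u where "u j = L w (X ^ j * uni Y)" for j
  have u_eq: "u j = (\<Sum>k<d. y $ k * a (k + j))" for j
    unfolding u_def L_X_power_mult_uni[OF deg] by (simp add: Y_def coeff_poly_upto)
  have "(\<Sum>k\<le>degree ft. coeff ft k * u (k + j)) = 0" for j
  proof -
    have "(\<Sum>k\<le>degree ft. coeff ft k * u (k + j))
        = (\<Sum>k<Suc (degree ft). coeff ft k * L w ((X ^ j * uni Y) * X ^ k))"
      by (simp add: u_def lessThan_Suc_atMost power_add algebra_simps)
    also have "\<dots> = L w ((X ^ j * uni Y) * uni ft)"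
      by (rule L_mult_uni[symmetric, OF Pn_mult[OF Pn_X_power uni_in_Pn]]) simp
    also have "\<dots> = 0"
      by (rule L_mult_ft[OF Pn_mult[OF Pn_X_power uni_in_Pn]])
    finally show ?thesis .
  qed
  then have "u j = 0" for j
    using recurrence_vanishes[OF ft_nonzero, of u d] h u_eq d_def by auto
  then have "Y = 0"
    using uni_eq_0_if_L_vanishes[OF deg] by (simp add: u_def)
  then show ?thesis
    using y by (intro eq_vecI) (auto simp: Y_def poly_upto_eq_0_iff)
qed

lemma hankel_solution_unique:
  assumes "c \<in> carrier_vec d" "c' \<in> carrier_vec d"
    and "\<forall>j<d. (\<Sum>k<d. c $ k * a (k + j)) = (\<Sum>k<d. c' $ k * a (k + j))"
  shows "c = c'"
proof -
  have "(\<Sum>k<d. (c - c') $ k * a (k + j)) = 0" if "j < d" for j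
  proof -
    have "(\<Sum>k<d. (c - c') $ k * a (k + j)) = (\<Sum>k<d. c $ k * a (k + j)) - (\<Sum>k<d. c' $ k * a (k + j))"
      unfolding sum_subtractf[symmetric] using assms(1,2) by (intro sum.cong) (auto simp: left_diff_distrib)
    then show ?thesis
      using assms(3) that by simp
  qed
  then have "c - c' = 0\<^sub>v d"
    using assms(1,2) by (intro hankel_injective) auto
  then have "c $ k = c' $ k" if "k < d" for k
    using assms(1,2) that by (metis carrier_vecD eq_iff_diff_eq_0 index_minus_vec(1) index_zero_vec(1))
  then show ?thesis
    using assms(1,2) by (intro eq_vecI) auto
qed

lemma degree_mod_ft: "degree (p mod ft) < d"
  using degree_mod_less'[OF ft_nonzero, of p] d_pos d_def by (cases "p mod ft = 0") auto

lemma uni_div_mod_ft: "uni p = uni (p div ft) * uni ft + uni (p mod ft)"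
  by (simp only: uni_add[symmetric] uni_mult[symmetric] div_mult_mod_eq)

lemma L_X_power_mult_Var:
  assumes i: "i \<in> {2..n}"
  shows "L w (X ^ j * Var i) = (\<Sum>k<d. coeff (f i mod ft) k * a (k + j))"
proof -
  have Var_i: "Var i \<in> Pn n"
    using i by (intro Pn_Var) auto
  have split: "X ^ j * uni (f i) = (X ^ j * uni (f i div ft)) * uni ft + X ^ j * uni (f i mod ft)"
    by (subst uni_div_mod_ft) (simp add: algebra_simps)
  have "X ^ j * Var i - X ^ j * uni (f i) = X ^ j * (Var i - uni (f i))"
    by (simp add: algebra_simps)
  then have "X ^ j * Var i - X ^ j * uni (f i) \<in> I"
    using is_ideal_mult[OF ideal Pn_X_power] shape i by simp
  then have "L w (X ^ j * Var i) = L w (X ^ j * uni (f i))"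
    by (rule L_cong_ideal[OF Pn_mult[OF Pn_X_power Var_i] Pn_mult[OF Pn_X_power uni_in_Pn]])
  also have "\<dots> = L w ((X ^ j * uni (f i div ft)) * uni ft) + L w (X ^ j * uni (f i mod ft))"
    unfolding split
    by (rule L_add[OF Pn_mult[OF Pn_mult[OF Pn_X_power uni_in_Pn] uni_in_Pn] Pn_mult[OF Pn_X_power uni_in_Pn]])
  also have "\<dots> = (\<Sum>k<d. coeff (f i mod ft) k * a (k + j))"
    using L_mult_ft[OF Pn_mult[OF Pn_X_power uni_in_Pn]] L_X_power_mult_uni[OF degree_mod_ft] by simp
  finally show ?thesis .
qed

subsection \<open>The reduced LEX basis of \<open>I + \<langle>ft\<rangle>\<close>\<close>

definition gen :: "nat \<Rightarrow> 'a mpoly" where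
  "gen i = Var i - uni (f i mod ft)"

definition G :: "'a mpoly set" where
  "G = insert (uni ft) (gen ` {2..n})"

lemma lm_uni_ft: "lm lex (uni ft) = Poly_Mapping.single 1 d"
  using lm_lex_uni[of ft] ft_monic d_def by simp

lemma lc_uni_ft: "lc lex (uni ft) = 1"
  using ft_monic d_def by (simp add: lc_def lm_uni_ft lookup_uni_single)

lemma uni_ft_nonzero: "uni ft \<noteq> 0"
  using lc_uni_ft by (auto simp: lc_def)

lemma keys_gen:
  assumes "m \<in> Poly_Mapping.keys (gen i)"
  shows "m = Poly_Mapping.single i 1 \<or> (\<exists>k<d. m = Poly_Mapping.single 1 k)"
proof (cases "m = Poly_Mapping.single i 1")
  case False
  then have "m \<in> Poly_Mapping.keys (uni (f i mod ft))"
    using assms by (simp add: gen_def in_keys_iff lookup_minus lookup_Var)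
  then obtain k where "m = Poly_Mapping.single 1 k" "k \<le> degree (f i mod ft)"
    by (elim keys_uni)
  then show ?thesis
    using degree_mod_ft[of "f i"] by (intro disjI2 exI[of _ k]) simp
qed simp

lemma lookup_gen_Var:
  assumes "i \<in> {2..n}"
  shows "Poly_Mapping.lookup (gen i) (Poly_Mapping.single i 1) = 1"
proof -
  have "Poly_Mapping.single i (1::nat) \<noteq> Poly_Mapping.single 1 k" for k
  proof
    assume "Poly_Mapping.single i (1::nat) = Poly_Mapping.single 1 k"
    then have "Poly_Mapping.lookup (Poly_Mapping.single i (1::nat)) i = Poly_Mapping.lookup (Poly_Mapping.single 1 k) i"
      by simp
    then show False
      using assms by (simp add: lookup_single)
  qed
  then show ?thesis
    by (simp add: gen_def lookup_minus lookup_Var lookup_uni_not_X1_power)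
qed

lemma lm_gen:
  assumes i: "i \<in> {2..n}"
  shows "lm lex (gen i) = Poly_Mapping.single i 1"
proof (rule lm_eqI[OF strict_total_on_lex])
  show "Poly_Mapping.single i 1 \<in> Poly_Mapping.keys (gen i)"
    using lookup_gen_Var[OF i] by (simp add: in_keys_iff)
  have "lex (Poly_Mapping.single 1 k) (Poly_Mapping.single i 1)" for k
    using i unfolding lex_def by (intro exI[of _ i]) (auto simp: lookup_single)
  then show "\<forall>m'\<in>Poly_Mapping.keys (gen i). m' \<noteq> Poly_Mapping.single i 1 \<longrightarrow> lex m' (Poly_Mapping.single i 1)"
    using keys_gen by blast
qed

lemma lc_gen: "i \<in> {2..n} \<Longrightarrow> lc lex (gen i) = 1"
  by (simp add: lc_def lm_gen lookup_gen_Var)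

lemma gen_nonzero: "i \<in> {2..n} \<Longrightarrow> gen i \<noteq> 0"
  using lookup_gen_Var by fastforce

lemma mem_ideal_add_ft: "b \<in> I \<Longrightarrow> q \<in> Pn n \<Longrightarrow> b + q * uni ft \<in> ideal_add n I (uni ft)"
  unfolding ideal_add_def by blast

lemma G_subset_ideal_add: "G \<subseteq> ideal_add n I (uni ft)"
proof -
  have "uni ft \<in> ideal_add n I (uni ft)"
    using mem_ideal_add_ft[OF is_ideal_0[OF ideal] Pn_one] by simp
  moreover have "gen i \<in> ideal_add n I (uni ft)" if "i \<in> {2..n}" for i
  proof -
    have "gen i = (Var i - uni (f i)) + uni (f i div ft) * uni ft"
      unfolding gen_def uni_div_mod_ft[of "f i"] by (simp add: algebra_simps)
    then show ?thesis
      using mem_ideal_add_ft[OF _ uni_in_Pn] shape that by simp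
  qed
  ultimately show ?thesis
    unfolding G_def by blast
qed

text \<open>Every monomial of such an element is a power of \<open>x\<^sub>1\<close> below \<open>x\<^sub>1\<^sup>d\<close>, so it is univariate of
  degree \<open>< d\<close>, and the minimality of \<open>ft\<close> forces it to vanish.\<close>

lemma ideal_add_lm_X1_power_less:
  assumes h: "h \<in> ideal_add n I (uni ft)" and lm_h: "lm lex h = Poly_Mapping.single 1 e" and "e < d"
  shows "h = 0"
proof (rule ccontr)
  assume "h \<noteq> 0"
  have keys_h: "Poly_Mapping.keys h \<subseteq> {m. Poly_Mapping.keys m \<subseteq> {1..n}}"
    using keys_subset_if_Pn ideal_add_subset_Pn[OF ideal uni_in_Pn] h by blast
  have "\<forall>m\<in>Poly_Mapping.keys h. \<exists>k<d. m = Poly_Mapping.single 1 k"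
  proof
    fix m
    assume m: "m \<in> Poly_Mapping.keys h"
    show "\<exists>k<d. m = Poly_Mapping.single 1 k"
    proof (cases "m = lm lex h")
      case False
      then have "lex m (Poly_Mapping.single 1 e)"
        using lm_greatest[OF strict_total_on_lex \<open>h \<noteq> 0\<close>] m lm_h by auto
      moreover have "Poly_Mapping.keys m \<subseteq> {1..n}"
        using m keys_h by blast
      ultimately obtain k where "k < e" "m = Poly_Mapping.single 1 k"
        using lex_less_X1_power by blast
      then show ?thesis
        using \<open>e < d\<close> by (intro exI[of _ k]) simp
    qed (use lm_h \<open>e < d\<close> in \<open>intro exI[of _ e], auto\<close>)
  qed
  define H where "H = poly_upto d (\<lambda>k. Poly_Mapping.lookup h (Poly_Mapping.single 1 k))"
  have "h = uni H"
    unfolding H_def by (rule uni_of_keys_X1_power) fact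
  moreover have "H = 0"
    using uni_eq_0_if_L_vanishes[OF degree_poly_upto[OF d_pos]] L_X_power_mult_ideal_add[OF h]
      \<open>h = uni H\<close> unfolding H_def by simp
  ultimately show False
    using \<open>h \<noteq> 0\<close> by simp
qed

lemma lm_ideal_add_divisible:
  assumes h: "h \<in> ideal_add n I (uni ft)" "h \<noteq> 0"
  shows "\<exists>g\<in>G. g \<noteq> 0 \<and> mdvd (lm lex g) (lm lex h)"
proof -
  define m where "m = lm lex h"
  have "Poly_Mapping.keys h \<subseteq> {m. Poly_Mapping.keys m \<subseteq> {1..n}}"
    using keys_subset_if_Pn ideal_add_subset_Pn[OF ideal uni_in_Pn] h(1) by blast
  moreover have "m \<in> Poly_Mapping.keys h"
    using lm_in_keys[OF strict_total_on_lex h(2)] unfolding m_def by blast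
  ultimately have keys_m: "Poly_Mapping.keys m \<subseteq> {1..n}"
    by blast
  show ?thesis
  proof (cases "\<exists>v\<in>{2..n}. 0 < Poly_Mapping.lookup m v")
    case True
    then obtain v where v: "v \<in> {2..n}" "0 < Poly_Mapping.lookup m v"
      by blast
    then have "mdvd (lm lex (gen v)) m"
      unfolding mdvd_def lm_gen[OF v(1)] by (auto simp: lookup_single when_def)
    then show ?thesis
      using v(1) gen_nonzero unfolding G_def m_def by blast
  next
    case False
    define e where "e = Poly_Mapping.lookup m 1"
    have m_eq: "m = Poly_Mapping.single 1 e"
      unfolding e_def using monomial_eq_X1_power[OF keys_m] False by auto
    have "d \<le> e"
      using ideal_add_lm_X1_power_less[OF h(1)] h(2) m_eq unfolding m_def by (meson not_le)
    then have "mdvd (lm lex (uni ft)) m"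
      unfolding mdvd_def lm_uni_ft m_eq by (auto simp: lookup_single when_def)
    then show ?thesis
      using uni_ft_nonzero unfolding G_def m_def by blast
  qed
qed

lemma G_interreduced:
  assumes "g \<in> G" "g' \<in> G - {g}" "m \<in> Poly_Mapping.keys g"
  shows "\<not> mdvd (lm lex g') m"
proof
  assume dvd: "mdvd (lm lex g') m"
  have m_cases: "m = Poly_Mapping.single i 1 \<or> (\<exists>k<d. m = Poly_Mapping.single 1 k)"
    if "g = gen i" for i
    using keys_gen assms(3) that by blast
  consider "g' = uni ft" | i' where "i' \<in> {2..n}" "g' = gen i'"
    using assms(2) unfolding G_def by blast
  then show False
  proof cases
    case 1
    then obtain i where i: "i \<in> {2..n}" "g = gen i"
      using assms(1,2) unfolding G_def by blast
    have dvd': "mdvd (Poly_Mapping.single 1 d) m"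
      using dvd unfolding 1 lm_uni_ft .
    from m_cases[OF i(2)] show False
    proof
      assume "m = Poly_Mapping.single i 1"
      then show False
        using mdvd_single_single[of 1 d i 1] dvd' d_pos i(1) by auto
    next
      assume "\<exists>k<d. m = Poly_Mapping.single 1 k"
      then obtain k where "k < d" "m = Poly_Mapping.single 1 k"
        by blast
      then show False
        using mdvd_single_single[of 1 d 1 k] dvd' d_pos by simp
    qed
  next
    case 2
    then have dvd': "mdvd (Poly_Mapping.single i' 1) m"
      using dvd lm_gen by simp
    have not_X1_power: "m \<noteq> Poly_Mapping.single 1 k" for k
      using mdvd_single_single[of i' 1 1 k] dvd' 2(1) by auto
    consider "g = uni ft" | i where "i \<in> {2..n}" "g = gen i" "i \<noteq> i'"
      using assms(1,2) 2 unfolding G_def by blast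
    then show False
    proof cases
      case 1
      then show False
        using assms(3) not_X1_power by (auto elim: keys_uni)
    next
      case (2 i)
      then show False
        using m_cases not_X1_power mdvd_single_single[of i' 1 i 1] dvd' by auto
    qed
  qed
qed

lemma G_reduced_GB: "is_reduced_GB n lex (ideal_add n I (uni ft)) G"
  unfolding is_reduced_GB_def is_GB_def
proof (intro conjI ballI impI)
  show "finite G"
    by (simp add: G_def)
  show "0 \<notin> G" "\<And>g. g \<in> G \<Longrightarrow> lc lex g = 1"
    unfolding G_def using uni_ft_nonzero gen_nonzero lc_uni_ft lc_gen by auto
next
  show "G \<subseteq> ideal_add n I (uni ft)"
    by (rule G_subset_ideal_add)
next
  fix h
  assume "h \<in> ideal_add n I (uni ft)" "h \<noteq> 0"
  then show "\<exists>g\<in>G. g \<noteq> 0 \<and> mdvd (lm lex g) (lm lex h)"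
    by (rule lm_ideal_add_divisible)
next
  fix g g' m
  assume "g \<in> G" "g' \<in> G - {g}" "m \<in> Poly_Mapping.keys g"
  then show "\<not> mdvd (lm lex g') m"
    by (rule G_interreduced)
qed

lemma hankel_solution_in_reduced_GB:
  assumes i: "i \<in> {2..n}"
  defines "sys c \<equiv> c \<in> carrier_vec d \<and>
    (\<forall>j<d. w \<bullet> ((mult_mat n lt1 I 1 ^\<^sub>m j * mult_mat n lt1 I i) *\<^sub>v unit_vec (card S) 0)
      = (\<Sum>k<d. c $ k * (w \<bullet> ((mult_mat n lt1 I 1 ^\<^sub>m (k + j)) *\<^sub>v unit_vec (card S) 0))))"
  shows "(\<exists>!c. sys c) \<and> (\<forall>c. sys c \<longrightarrow> (\<exists>G. is_reduced_GB n lex (ideal_add n I (uni ft)) G \<and>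
      Var i - (\<Sum>k<d. Poly_Mapping.single (Poly_Mapping.single 1 k) (c $ k)) \<in> G))"
proof -
  have sys_iff: "sys c \<longleftrightarrow> c \<in> carrier_vec d \<and> (\<forall>j<d. L w (X ^ j * Var i) = (\<Sum>k<d. c $ k * a (k + j)))" for c
    using i w_carrier unfolding sys_def
    by (simp add: scalar_prod_mult_mat_pow_unit[OF n_pos _ std_monos_nonempty]
        scalar_prod_mult_mat_pow_mult_unit[OF n_pos _ std_monos_nonempty])
  define c0 where "c0 = vec d (\<lambda>k. coeff (f i mod ft) k)"
  have "sys c0"
    unfolding sys_iff c0_def using L_X_power_mult_Var[OF i] by simp
  have unique: "c = c0" if "sys c" for c
    using \<open>sys c\<close> \<open>sys c0\<close> unfolding sys_iff by (intro hankel_solution_unique) auto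
  have "Var i - (\<Sum>k<d. Poly_Mapping.single (Poly_Mapping.single 1 k) (c0 $ k)) = gen i"
    using uni_eq_sum_lessThan[OF degree_mod_ft, of "f i"]
    by (simp add: gen_def c0_def single_X1_power)
  then have "Var i - (\<Sum>k<d. Poly_Mapping.single (Poly_Mapping.single 1 k) (c0 $ k)) \<in> G"
    using i unfolding G_def by blast
  show ?thesis
  proof (intro conjI allI impI)
    show "\<exists>!c. sys c"
      using \<open>sys c0\<close> unique by blast
  next
    fix c
    assume "sys c"
    then show "\<exists>G. is_reduced_GB n lex (ideal_add n I (uni ft)) G \<and>
        Var i - (\<Sum>k<d. Poly_Mapping.single (Poly_Mapping.single 1 k) (c $ k)) \<in> G"
      using unique G_reduced_GB \<open>_ \<in> G\<close> by blast
  qed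
qed

end

theorem proposition3p6:
  fixes n D d :: nat and lt1 :: "mono \<Rightarrow> mono \<Rightarrow> bool"
    and I :: "'a::field mpoly set" and f :: "nat \<Rightarrow> 'a poly" and ft :: "'a poly"
    and w :: "'a vec"
  assumes "1 \<le> n"
    and "is_ideal n I"
    and "finite (std_monos n lt1 I)"
    and "is_reduced_GB n lex I (insert (uni (f 1)) {Var i - uni (f i) | i. i \<in> {2..n}})"
    and "term_order n lt1"
    and "D = card (std_monos n lt1 I)"
    and "invertible_mat (mult_mat n lt1 I 1)"
    and "w \<in> carrier_vec D"
    and "is_minpoly_seq (\<lambda>i. w \<bullet> ((mult_mat n lt1 I 1 ^\<^sub>m i) *\<^sub>v unit_vec D 0)) (2 * D) ft"
    and "ft dvd f 1" and "d = Polynomial.degree ft" and "0 < d" and "d < D"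
  shows "\<forall>i\<in>{2..n}.
    (\<exists>!c. c \<in> carrier_vec d \<and>
       (\<forall>j<d. w \<bullet> ((mult_mat n lt1 I 1 ^\<^sub>m j * mult_mat n lt1 I i) *\<^sub>v unit_vec D 0)
          = (\<Sum>k<d. c $ k * (w \<bullet> ((mult_mat n lt1 I 1 ^\<^sub>m (k + j)) *\<^sub>v unit_vec D 0))))) \<and>
    (\<forall>c. c \<in> carrier_vec d \<and>
       (\<forall>j<d. w \<bullet> ((mult_mat n lt1 I 1 ^\<^sub>m j * mult_mat n lt1 I i) *\<^sub>v unit_vec D 0)
          = (\<Sum>k<d. c $ k * (w \<bullet> ((mult_mat n lt1 I 1 ^\<^sub>m (k + j)) *\<^sub>v unit_vec D 0))))
       \<longrightarrow> (\<exists>G. is_reduced_GB n lex (ideal_add n I (uni ft)) G \<and>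
              Var i - (\<Sum>k<d. Poly_Mapping.single (Poly_Mapping.single 1 k) (c $ k)) \<in> G))"
proof -
  have shape: "\<forall>i\<in>{2..n}. Var i - uni (f i) \<in> I"
    using assms(4) unfolding is_reduced_GB_def is_GB_def by blast
  interpret shape_position_form n lt1 I w f ft d
    using assms(1-3,5,6,8,9,11-13) shape by unfold_locales simp_all
  show ?thesis
    unfolding assms(6) using hankel_solution_in_reduced_GB by blast
qed

end
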